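(* Let $1\le p<\infty$, $N\ge2$, and for $1\le i\le N$ let $T_i=T_{f_i,\omega^{(i)}}$ be unilateral pseudo-shifts on $\ell^p(\mathbb{N})$ with maps $f_i$ and weights $\omega^{(i)}=(w^{(i)}_{f_i(m)})_m$; let $W^{(i)}_{m,n}=\prod_{\nu=1}^nw^{(i)}_{f_i^\nu(m)}$. The following are equivalent: (i) $T_1,\dots,T_N$ are s-weakly mixing. (ii) $T_1,\dots,T_N$ satisfy the Simultaneous Hypercyclicity Criterion. (iii) For each $R\in\mathbb{N}$, the direct sums $\oplus_{r=1}^RT_1,\dots,\oplus_{r=1}^RT_N$ satisfy the Simultaneous Blow-up/Collapse Criterion. (iv) There is a strictly increasing sequence $(n_k)$ of positive integers such that (a) $|W^{(i)}_{m,n_k}|\to\infty$ as $k\to\infty$ for all $m\in\mathbb{N}$, $1\le i\le N$; and (b) for each $\epsilon>0$ and $K,M\in\mathbb{N}$ there is $k\ge K$ such that for all $1\le i,\ell\le N$ with $i\ne\ell$: $\left|\frac{W^{(i)}_{f_i^{-n_k}(j),n_k}}{W^{(\ell)}_{f_\ell^{-n_k}(j),n_k}}\right|<\epsilon$ whenever $j\in f_\ell^{n_k}([M])\cap f_i^{n_k}(\mathbb{N}\setminus[M])$, and for every $j\in f_\ell^{n_k}([M])\cap f_i^{n_k}([M])$ we have $f_\ell^{-n_k}(j)=f_i^{-n_k}(j)$ and $\left|\frac{W^{(i)}_{f_i^{-n_k}(j),n_k}}{W^{(\ell)}_{f_\ell^{-n_k}(j),n_k}}-1\right|<\epsilon$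.
   Context: $\mathbb{N}=\{1,2,\dots\}$; $\{e_m\}$ is the canonical basis of $\ell^p(\mathbb{N})$ over $\mathbb{K}\in\{\mathbb{R},\mathbb{C}\}$. For a strictly increasing $f:\mathbb{N}\to\mathbb{N}$ with $f(1)>1$ and a bounded, nonzero sequence of scalars $\omega=(w_{f(m)})_m$, $T_{f,\omega}(\sum_m\alpha_me_m)=\sum_mw_{f(m)}\alpha_{f(m)}e_m$. $[M]=\{1,\dots,M\}$, $f^n$ the $n$-fold composition, $f(A)=\{f(m):m\in A\}$, $f^{-n}$ the inverse of $f^n$ on $f^n(\mathbb{N})$. For operators $S_1,\dots,S_N$ on a Banach space $Y$: they are s-topologically transitive if for all non-empty open $U,V\subset Y$ there is $n$ with $V\cap S_1^{-n}(U)\cap\cdots\cap S_N^{-n}(U)\ne\emptyset$; s-weakly mixing if $S_1\oplus S_1,\dots,S_N\oplus S_N$ are s-topologically transitive. They satisfy the Simultaneous Hypercyclicity Criterion if there exist a strictly increasing $(n_k)$, a dense $Y_0\subset Y$, a set $W_0\subset\oplus_{i=1}^NY$ whose closure contains the diagonal $\{(y,\dots,y):y\in Y\}$, and maps $R_k:W_0\to Y$ with: $S_i^{n_k}\to0$ pointwise on $Y_0$ for each $i$; $R_k\to0$ pointwise on $W_0$; and for each $w=(w_1,\dots,w_N)\in W_0$ and each $i$ there is $y_i$ in the convex hull of $\{w_1,\dots,w_N\}$ with $S_i^{n_k}R_kw\to y_i$. They satisfy the Simultaneous Blow-up/Collapse Criterion if there exist an increasing $(n_k)$, a dense $Y_0\subset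 Y$ and maps $S_k:Y_0\to Y$ with $S_i^{n_k}y\to0$ for all $y\in Y_0$, $1\le i\le N$, and such that for each $\epsilon>0$, $K\in\mathbb{N}$, $y_0\in Y_0$ there is $k\ge K$ with $\|S_k(y_0)\|<\epsilon$ and $\|S_i^{n_k}S_k(y_0)-y_0\|<\epsilon$ for all $i$. *)

theory Defs
  imports "HOL-Analysis.Analysis" "HOL-Library.Function_Algebras"
begin

definition scalars_R_or_C :: "'k::real_normed_field itself \<Rightarrow> bool" where
  "scalars_R_or_C (_::'k itself) \<longleftrightarrow>
     (\<exists>\<phi>::'k \<Rightarrow> real. bij \<phi> \<and> (\<forall>x y. \<phi> (x + y) = \<phi> x + \<phi> y \<and> \<phi> (x * y) = \<phi> x * \<phi> y)
          \<and> (\<forall>x. norm (\<phi> x) = norm x))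
   \<or> (\<exists>\<phi>::'k \<Rightarrow> complex. bij \<phi> \<and> (\<forall>x y. \<phi> (x + y) = \<phi> x + \<phi> y \<and> \<phi> (x * y) = \<phi> x * \<phi> y)
          \<and> (\<forall>x. norm (\<phi> x) = norm x))"

section \<open>The space l^p(N), N = {1,2,...}; coordinate 0 is unused and fixed to 0\<close>

definition lp_space :: "real \<Rightarrow> (nat \<Rightarrow> 'k::real_normed_vector) set" where
  "lp_space p = {x. x 0 = 0 \<and> summable (\<lambda>m. norm (x m) powr p)}"

definition lp_dist :: "real \<Rightarrow> (nat \<Rightarrow> 'k::real_normed_vector) \<Rightarrow> (nat \<Rightarrow> 'k) \<Rightarrow> real" where
  "lp_dist p x y = (\<Sum>m. norm (x m - y m) powr p) powr (1 / p)"

definition pseudo_shift_data :: "(nat \<Rightarrow> nat) \<Rightarrow> (nat \<Rightarrow> 'k::real_normed_field) \<Rightarrow> bool" where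
  "pseudo_shift_data f w \<longleftrightarrow>
     strict_mono_on {1..} f \<and> f 1 > 1 \<and>
     (\<exists>B. \<forall>m\<ge>1. norm (w (f m)) \<le> B) \<and> (\<forall>m\<ge>1. w (f m) \<noteq> 0)"

definition pseudo_shift :: "(nat \<Rightarrow> nat) \<Rightarrow> (nat \<Rightarrow> 'k::real_normed_field) \<Rightarrow> (nat \<Rightarrow> 'k) \<Rightarrow> (nat \<Rightarrow> 'k)" where
  "pseudo_shift f w x = (\<lambda>m. if m = 0 then 0 else w (f m) * x (f m))"

definition Wprod :: "(nat \<Rightarrow> nat) \<Rightarrow> (nat \<Rightarrow> 'k::real_normed_field) \<Rightarrow> nat \<Rightarrow> nat \<Rightarrow> 'k" where
  "Wprod f w m n = (\<Prod>\<nu>\<in>{1..n}. w ((f ^^ \<nu>) m))"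

definition open_in_ms :: "'v set \<Rightarrow> ('v \<Rightarrow> 'v \<Rightarrow> real) \<Rightarrow> 'v set \<Rightarrow> bool" where
  "open_in_ms X d U \<longleftrightarrow> U \<subseteq> X \<and> (\<forall>x\<in>U. \<exists>e>0. \<forall>y\<in>X. d x y < e \<longrightarrow> y \<in> U)"

definition dense_in_ms :: "'v set \<Rightarrow> ('v \<Rightarrow> 'v \<Rightarrow> real) \<Rightarrow> 'v set \<Rightarrow> bool" where
  "dense_in_ms X d A \<longleftrightarrow> A \<subseteq> X \<and> (\<forall>x\<in>X. \<forall>e>0. \<exists>a\<in>A. d x a < e)"

definition conv_ms :: "('v \<Rightarrow> 'v \<Rightarrow> real) \<Rightarrow> (nat \<Rightarrow> 'v) \<Rightarrow> 'v \<Rightarrow> bool" where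
  "conv_ms d s y \<longleftrightarrow> (\<lambda>k. d (s k) y) \<longlonglongrightarrow> 0"

definition dsum_carrier :: "nat \<Rightarrow> 'v::zero set \<Rightarrow> (nat \<Rightarrow> 'v) set" where
  "dsum_carrier R X = {x. (\<forall>r\<in>{1..R}. x r \<in> X) \<and> (\<forall>r. r \<notin> {1..R} \<longrightarrow> x r = 0)}"

definition dsum_dist :: "nat \<Rightarrow> ('v \<Rightarrow> 'v \<Rightarrow> real) \<Rightarrow> (nat \<Rightarrow> 'v) \<Rightarrow> (nat \<Rightarrow> 'v) \<Rightarrow> real" where
  "dsum_dist R d x y = (\<Sum>r\<in>{1..R}. d (x r) (y r))"

definition dsum_op :: "nat \<Rightarrow> ('v::zero \<Rightarrow> 'v) \<Rightarrow> (nat \<Rightarrow> 'v) \<Rightarrow> (nat \<Rightarrow> 'v)" where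
  "dsum_op R S x = (\<lambda>r. if r \<in> {1..R} then S (x r) else 0)"

definition s_top_transitive :: "'v set \<Rightarrow> ('v \<Rightarrow> 'v \<Rightarrow> real) \<Rightarrow> nat \<Rightarrow> (nat \<Rightarrow> 'v \<Rightarrow> 'v) \<Rightarrow> bool" where
  "s_top_transitive X d N S \<longleftrightarrow>
     (\<forall>U V. open_in_ms X d U \<longrightarrow> open_in_ms X d V \<longrightarrow> U \<noteq> {} \<longrightarrow> V \<noteq> {} \<longrightarrow>
        (\<exists>n\<ge>1. \<exists>y\<in>V. \<forall>i\<in>{1..N}. (S i ^^ n) y \<in> U))"

definition s_weakly_mixing :: "'v::zero set \<Rightarrow> ('v \<Rightarrow> 'v \<Rightarrow> real) \<Rightarrow> nat \<Rightarrow> (nat \<Rightarrow> 'v \<Rightarrow> 'v) \<Rightarrow> bool" where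
  "s_weakly_mixing X d N S \<longleftrightarrow>
     s_top_transitive (dsum_carrier 2 X) (dsum_dist 2 d) N (\<lambda>i. dsum_op 2 (S i))"

definition in_conv_hull :: "nat \<Rightarrow> (nat \<Rightarrow> 'a \<Rightarrow> 'k::real_vector) \<Rightarrow> ('a \<Rightarrow> 'k) \<Rightarrow> bool" where
  "in_conv_hull N w y \<longleftrightarrow>
     (\<exists>c::nat \<Rightarrow> real. (\<forall>j\<in>{1..N}. 0 \<le> c j) \<and> (\<Sum>j\<in>{1..N}. c j) = 1 \<and>
        y = (\<lambda>a. \<Sum>j\<in>{1..N}. c j *\<^sub>R w j a))"

definition sim_hc_criterion ::
  "('a \<Rightarrow> 'k::real_vector) set \<Rightarrow> (('a \<Rightarrow> 'k) \<Rightarrow> ('a \<Rightarrow> 'k) \<Rightarrow> real) \<Rightarrow> nat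
     \<Rightarrow> (nat \<Rightarrow> ('a \<Rightarrow> 'k) \<Rightarrow> ('a \<Rightarrow> 'k)) \<Rightarrow> bool" where
  "sim_hc_criterion X d N S \<longleftrightarrow>
     (\<exists>(nk::nat \<Rightarrow> nat) Y0 W0 (Rk::nat \<Rightarrow> (nat \<Rightarrow> 'a \<Rightarrow> 'k) \<Rightarrow> ('a \<Rightarrow> 'k)).
        strict_mono nk \<and> dense_in_ms X d Y0 \<and>
        W0 \<subseteq> dsum_carrier N X \<and>
        (\<forall>y\<in>X. \<forall>e>0. \<exists>w\<in>W0. dsum_dist N d w (\<lambda>r. if r \<in> {1..N} then y else 0) < e) \<and>
        (\<forall>k. \<forall>w\<in>W0. Rk k w \<in> X) \<and>
        (\<forall>i\<in>{1..N}. \<forall>y\<in>Y0. conv_ms d (\<lambda>k. (S i ^^ nk k) y) 0) \<and>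
        (\<forall>w\<in>W0. conv_ms d (\<lambda>k. Rk k w) 0) \<and>
        (\<forall>w\<in>W0. \<forall>i\<in>{1..N}. \<exists>y. in_conv_hull N w y \<and> conv_ms d (\<lambda>k. (S i ^^ nk k) (Rk k w)) y))"

definition sim_bc_criterion ::
  "'v::zero set \<Rightarrow> ('v \<Rightarrow> 'v \<Rightarrow> real) \<Rightarrow> nat \<Rightarrow> (nat \<Rightarrow> 'v \<Rightarrow> 'v) \<Rightarrow> bool" where
  "sim_bc_criterion X d N S \<longleftrightarrow>
     (\<exists>(nk::nat \<Rightarrow> nat) Y0 (Sk::nat \<Rightarrow> 'v \<Rightarrow> 'v).
        mono nk \<and> dense_in_ms X d Y0 \<and>
        (\<forall>k. \<forall>y\<in>Y0. Sk k y \<in> X) \<and>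
        (\<forall>i\<in>{1..N}. \<forall>y\<in>Y0. conv_ms d (\<lambda>k. (S i ^^ nk k) y) 0) \<and>
        (\<forall>e>0. \<forall>K. \<forall>y0\<in>Y0. \<exists>k\<ge>K. d (Sk k y0) 0 < e \<and>
            (\<forall>i\<in>{1..N}. d ((S i ^^ nk k) (Sk k y0)) y0 < e)))"

end

theory Submission
  imports Defs
begin

text \<open>Write \<open>W\<^sub>i(m, n)\<close> for \<open>W\<^sup>(\<^sup>i\<^sup>)\<^sub>m\<^sub>,\<^sub>n\<close>, so that \<open>(T\<^sub>i\<^sup>n x)(m) = W\<^sub>i(m, n) x(f\<^sub>i\<^sup>n(m))\<close>. All four conditions
  are equivalent to the existence of \<^emph>\<open>good exponents\<close>: for all \<open>\<epsilon> > 0\<close>, \<open>M\<close> and \<open>L\<close> some \<open>n\<close>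
  satisfies \<open>\<bar>W\<^sub>i(m, n)\<bar> > L\<close> for \<open>m \<le> M\<close> and the ratio bounds of (iv)(b) with \<open>\<epsilon>\<close>.

  Each of (i)--(iii) yields, for every \<open>\<eta> > 0\<close>, an exponent \<open>n\<close>, a vector \<open>a\<close> with all coordinates
  below \<open>\<eta>\<close> such that every \<open>T\<^sub>i\<^sup>n a\<close> is coordinatewise \<open>\<eta>\<close>-close to the indicator of \<open>[M]\<close>, and a
  vector \<open>b\<close> such that every \<open>T\<^sub>i\<^sup>n b\<close> is close to \<open>m \<mapsto> m\<close> on \<open>[M]\<close>. Comparing these coordinates
  at a common position \<open>f\<^sub>l\<^sup>n(m) = f\<^sub>i\<^sup>n(m')\<close> shows that \<open>n\<close> is a good exponent; the second vector
  rules out \<open>m \<noteq> m'\<close>.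

  Conversely, good exponents \<open>n\<^sub>k\<close> with \<open>\<epsilon> \<rightarrow> 0\<close> and \<open>M, L \<rightarrow> \<infinity>\<close> give approximate right inverses
  \<open>R\<^sub>k y = \<Sum> y(m) / W\<^sub>i(m, n\<^sub>k) e\<^bsub>f\<^sub>i\<^sup>n\<^sup>k(m)\<^esub>\<close> on finitely supported \<open>y\<close>: \<open>R\<^sub>k y \<rightarrow> 0\<close> because the
  weights blow up, \<open>T\<^sub>l\<^sup>n\<^sup>k R\<^sub>k y \<rightarrow> y\<close> by the ratio bounds, and \<open>T\<^sub>i\<^sup>n\<^sup>k y = 0\<close> once \<open>n\<^sub>k\<close> exceeds the
  support of \<open>y\<close>. These maps witness (ii), (iii), (iv) and the transitivity required in (i).\<close>

definition lp_sum :: "real \<Rightarrow> (nat \<Rightarrow> 'a::real_normed_vector) \<Rightarrow> real" where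
  "lp_sum p x = (\<Sum>m. norm (x m) powr p)"

lemma lp_dist_eq_lp_sum: "lp_dist p x y = lp_sum p (\<lambda>m. x m - y m) powr (1 / p)"
  unfolding lp_dist_def lp_sum_def by simp

lemma lp_dist_nonneg: "0 \<le> lp_dist p x y"
  unfolding lp_dist_def by simp

lemma lp_dist_commute: "lp_dist p x y = lp_dist p y x"
  unfolding lp_dist_def by (simp add: norm_minus_commute)

lemma lp_dist_self: "lp_dist p x x = 0"
  unfolding lp_dist_def by simp

lemma lp_sum_nonneg: "summable (\<lambda>m. norm (x m) powr p) \<Longrightarrow> 0 \<le> lp_sum p x"
  unfolding lp_sum_def by (rule suminf_nonneg) auto

lemma norm_add_powr_le:
  fixes a b :: "'a::real_normed_vector"
  assumes "0 < p"
  shows "norm (a + b) powr p \<le> 2 powr p * (norm a powr p + norm b powr p)"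
proof -
  define M where "M = max (norm a) (norm b)"
  have "norm (a + b) powr p \<le> (2 * M) powr p"
    using norm_triangle_ineq[of a b] assms unfolding M_def by (intro powr_mono2) auto
  also have "\<dots> = 2 powr p * M powr p" by (simp add: powr_mult M_def)
  also have "M powr p \<le> norm a powr p + norm b powr p" unfolding M_def by (auto simp: max_def)
  finally show ?thesis by simp
qed

lemma
  fixes a b :: "nat \<Rightarrow> 'a::real_normed_vector"
  assumes p: "0 < p"
    and a: "summable (\<lambda>m. norm (a m) powr p)" and b: "summable (\<lambda>m. norm (b m) powr p)"
  shows summable_norm_add_powr: "summable (\<lambda>m. norm (a m + b m) powr p)"
    and lp_sum_add_le: "lp_sum p (\<lambda>m. a m + b m) \<le> 2 powr p * (lp_sum p a + lp_sum p b)"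
proof -
  have bound: "summable (\<lambda>m. 2 powr p * (norm (a m) powr p + norm (b m) powr p))"
    using a b by (intro summable_mult summable_add)
  show sum: "summable (\<lambda>m. norm (a m + b m) powr p)"
    by (rule summable_comparison_test'[OF bound, of 0]) (use norm_add_powr_le[OF p] in auto)
  have "lp_sum p (\<lambda>m. a m + b m) \<le> (\<Sum>m. 2 powr p * (norm (a m) powr p + norm (b m) powr p))"
    unfolding lp_sum_def by (rule suminf_le[OF _ sum bound]) (use norm_add_powr_le[OF p] in auto)
  also have "\<dots> = 2 powr p * (lp_sum p a + lp_sum p b)"
    unfolding lp_sum_def using a b by (simp add: suminf_mult[OF summable_add[OF a b]] suminf_add)
  finally show "lp_sum p (\<lambda>m. a m + b m) \<le> 2 powr p * (lp_sum p a + lp_sum p b)" .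
qed

lemma
  assumes "finite E" "\<And>m. m \<notin> E \<Longrightarrow> x m = 0"
  shows summable_finite_support: "summable (\<lambda>m. norm (x m) powr p)"
    and lp_sum_finite_support: "lp_sum p x = (\<Sum>m\<in>E. norm (x m) powr p)"
  unfolding lp_sum_def by (intro summable_finite[OF assms(1)] suminf_finite[OF assms(1)], use assms(2) in simp)+

lemma lp_sum_le_card_mult:
  assumes "finite E" "\<And>m. m \<notin> E \<Longrightarrow> x m = 0" "0 < p" "\<And>m. m \<in> E \<Longrightarrow> norm (x m) \<le> c"
  shows "lp_sum p x \<le> real (card E) * c powr p"
proof -
  have "lp_sum p x = (\<Sum>m\<in>E. norm (x m) powr p)" by (rule lp_sum_finite_support[OF assms(1,2)])
  also have "\<dots> \<le> (\<Sum>m\<in>E. c powr p)" by (intro sum_mono powr_mono2) (use assms in auto)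
  finally show ?thesis by simp
qed

lemma lp_dist_less_of_lp_sum_less:
  assumes p: "0 < p" and e: "0 < e" and less: "lp_sum p (\<lambda>m. x m - y m) < e powr p"
    and summable: "summable (\<lambda>m. norm (x m - y m) powr p)"
  shows "lp_dist p x y < e"
proof -
  have "lp_dist p x y < (e powr p) powr (1 / p)"
    unfolding lp_dist_eq_lp_sum
    by (intro powr_less_mono2) (use p less lp_sum_nonneg[OF summable] in auto)
  also have "\<dots> = e" using p e by (simp add: powr_powr)
  finally show ?thesis .
qed

lemma lp_sum_less_of_lp_dist_less:
  assumes p: "0 < p" and summable: "summable (\<lambda>m. norm (x m - y m) powr p)"
    and less: "lp_dist p x y < e"
  shows "lp_sum p (\<lambda>m. x m - y m) < e powr p"
proof -
  have "lp_sum p (\<lambda>m. x m - y m) = (lp_sum p (\<lambda>m. x m - y m) powr (1 / p)) powr p"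
    using p lp_sum_nonneg[OF summable] by (simp add: powr_powr)
  also have "\<dots> < e powr p"
    by (rule powr_less_mono2) (use p less in \<open>auto simp: lp_dist_eq_lp_sum\<close>)
  finally show ?thesis .
qed

lemma summable_comp_inj_on:
  fixes h :: "nat \<Rightarrow> real"
  assumes h: "summable h" "\<And>j. 0 \<le> h j" and g: "inj_on g {1..}"
  shows "summable (\<lambda>m. if m = 0 then 0 else h (g m))"
proof (rule bounded_imp_summable)
  fix n
  have "(\<Sum>m\<le>n. if m = 0 then 0 else h (g m)) = (\<Sum>m\<in>{1..n}. h (g m))"
    by (rule sum.mono_neutral_cong_right) auto
  also have "\<dots> = (\<Sum>j\<in>g ` {1..n}. h j)"
    using inj_on_subset[OF g] by (subst sum.reindex) auto
  also have "\<dots> \<le> suminf h" by (rule sum_le_suminf) (use h in auto)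
  finally show "(\<Sum>m\<le>n. if m = 0 then 0 else h (g m)) \<le> suminf h" .
qed (use h in auto)

lemma zero_in_lp_space: "0 \<in> lp_space p"
  unfolding lp_space_def by simp

lemma lp_space_finite_support:
  assumes "finite E" "\<And>m. m \<notin> E \<Longrightarrow> x m = 0" "x 0 = 0"
  shows "x \<in> lp_space p"
  using summable_finite_support[OF assms(1,2)] assms(3) unfolding lp_space_def by simp

lemma lp_space_add:
  assumes "x \<in> lp_space p" "y \<in> lp_space p" "0 < p"
  shows "(\<lambda>m. x m + y m) \<in> lp_space p"
  using summable_norm_add_powr[OF assms(3), of x y] assms unfolding lp_space_def by simp

lemma lp_space_scaleR:
  assumes "x \<in> lp_space p"
  shows "(\<lambda>m. c *\<^sub>R x m) \<in> lp_space p"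
proof -
  have "summable (\<lambda>m. \<bar>c\<bar> powr p * norm (x m) powr p)"
    using assms unfolding lp_space_def by (intro summable_mult) simp
  then show ?thesis using assms unfolding lp_space_def by (simp add: powr_mult)
qed

lemma lp_space_sum:
  assumes "finite I" "\<And>j. j \<in> I \<Longrightarrow> x j \<in> lp_space p" "0 < p"
  shows "(\<lambda>m. \<Sum>j\<in>I. x j m) \<in> lp_space p"
  using assms
proof (induction I rule: finite_induct)
  case empty
  then show ?case using zero_in_lp_space by (simp add: zero_fun_def)
next
  case (insert j I)
  then show ?case using lp_space_add[of "x j" p "\<lambda>m. \<Sum>j\<in>I. x j m"] by simp
qed

lemma summable_lp_diff:
  assumes "x \<in> lp_space p" "y \<in> lp_space p" "0 < p"
  shows "summable (\<lambda>m. norm (x m - y m) powr p)"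
proof -
  have "(\<lambda>m. x m + - y m) \<in> lp_space p"
    by (rule lp_space_add[OF assms(1) _ assms(3)]) (use assms(2) in \<open>simp add: lp_space_def\<close>)
  then show ?thesis unfolding lp_space_def by simp
qed

lemma norm_le_lp_dist:
  assumes "x \<in> lp_space p" "y \<in> lp_space p" "0 < p"
  shows "norm (x m - y m) \<le> lp_dist p x y"
proof -
  have summable: "summable (\<lambda>m. norm (x m - y m) powr p)" by (rule summable_lp_diff[OF assms])
  have "norm (x m - y m) = (norm (x m - y m) powr p) powr (1 / p)"
    using assms(3) by (simp add: powr_powr)
  also have "\<dots> \<le> lp_dist p x y"
    unfolding lp_dist_eq_lp_sum lp_sum_def
    using sum_le_suminf[OF summable, of "{m}"] assms(3) by (intro powr_mono2) auto
  finally show ?thesis .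
qed

text \<open>Instead of Minkowski's inequality, this weak triangle inequality suffices.\<close>

lemma lp_dist_quasi_triangle:
  assumes p: "1 \<le> p" and e: "0 < e"
    and mem: "x \<in> lp_space p" "y \<in> lp_space p" "z \<in> lp_space p"
    and xy: "lp_dist p x y < e / 4" and yz: "lp_dist p y z < e / 4"
  shows "lp_dist p x z < e"
proof -
  have p0: "0 < p" using p by simp
  have sxy: "summable (\<lambda>m. norm (x m - y m) powr p)" and syz: "summable (\<lambda>m. norm (y m - z m) powr p)"
    using summable_lp_diff[OF _ _ p0] mem by auto
  have split: "(\<lambda>m. x m - z m) = (\<lambda>m. (x m - y m) + (y m - z m))" by auto
  have "lp_sum p (\<lambda>m. x m - z m) \<le> 2 powr p * (lp_sum p (\<lambda>m. x m - y m) + lp_sum p (\<lambda>m. y m - z m))"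
    unfolding split by (rule lp_sum_add_le[OF p0 sxy syz])
  also have "\<dots> < 2 powr p * ((e / 4) powr p + (e / 4) powr p)"
    using lp_sum_less_of_lp_dist_less[OF p0 sxy xy] lp_sum_less_of_lp_dist_less[OF p0 syz yz]
    by (intro mult_strict_left_mono) auto
  also have "\<dots> = 2 * (e / 2) powr p"
    using powr_mult[of 2 "e / 4" p] e by simp
  also have "\<dots> \<le> 2 powr p * (e / 2) powr p"
    using powr_mono[of 1 p 2] p by (intro mult_right_mono) auto
  also have "\<dots> = e powr p" using e by (simp add: powr_mult[symmetric])
  finally show ?thesis
    by (rule lp_dist_less_of_lp_sum_less[OF p0 e]) (use split summable_lp_diff mem p0 in auto)
qed

definition truncate :: "nat \<Rightarrow> (nat \<Rightarrow> 'a::zero) \<Rightarrow> nat \<Rightarrow> 'a" where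
  "truncate S x = (\<lambda>m. if m \<le> S then x m else 0)"

lemma truncate_in_lp_space: "x \<in> lp_space p \<Longrightarrow> truncate S x \<in> lp_space p"
  by (rule lp_space_finite_support[of "{..S}"]) (auto simp: truncate_def lp_space_def)

lemma eventually_lp_dist_truncate_less:
  assumes x: "x \<in> lp_space p" and p: "0 < p" and e: "0 < e"
  shows "eventually (\<lambda>S. lp_dist p x (truncate S x) < e) sequentially"
proof -
  define g where "g m = norm (x m) powr p" for m
  have g: "summable g" using x unfolding g_def lp_space_def by simp
  have "eventually (\<lambda>S. dist (\<Sum>m<Suc S. g m) (suminf g) < e powr p) sequentially"
    using tendstoD[OF summable_LIMSEQ[OF g]] e
    by (subst eventually_sequentially_Suc[of "\<lambda>S. dist (sum g {..<S}) (suminf g) < e powr p"]) simp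
  then show ?thesis
  proof (rule eventually_mono)
    fix S assume close: "dist (\<Sum>m<Suc S. g m) (suminf g) < e powr p"
    define h where "h m = (if m < Suc S then g m else 0)" for m
    have h: "summable h" unfolding h_def by (rule summable_finite[of "{..<Suc S}"]) auto
    have tail: "(\<lambda>m. norm (x m - truncate S x m) powr p) = (\<lambda>m. g m - h m)"
      unfolding g_def h_def truncate_def by auto
    have "suminf h = (\<Sum>m<Suc S. g m)"
      using suminf_finite[of "{..<Suc S}" h] unfolding h_def by simp
    have "lp_sum p (\<lambda>m. x m - truncate S x m) = suminf g - suminf h"
      unfolding lp_sum_def tail by (rule suminf_diff[OF g h, symmetric])
    then have "lp_sum p (\<lambda>m. x m - truncate S x m) < e powr p"
      using close \<open>suminf h = _\<close> by (simp add: dist_real_def)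
    then show "lp_dist p x (truncate S x) < e"
      by (rule lp_dist_less_of_lp_sum_less[OF p e]) (use summable_diff[OF g h] tail in simp)
  qed
qed

lemma norm_le_dsum_dist:
  assumes "x \<in> dsum_carrier R (lp_space p)" "y \<in> dsum_carrier R (lp_space p)" "r \<in> {1..R}" "0 < p"
  shows "norm (x r m - y r m) \<le> dsum_dist R (lp_dist p) x y"
proof -
  have "norm (x r m - y r m) \<le> lp_dist p (x r) (y r)"
    by (rule norm_le_lp_dist) (use assms in \<open>auto simp: dsum_carrier_def\<close>)
  also have "\<dots> \<le> dsum_dist R (lp_dist p) x y"
    unfolding dsum_dist_def by (rule member_le_sum) (use assms lp_dist_nonneg in auto)
  finally show ?thesis .
qed

lemma dsum_dist_less:
  assumes "1 \<le> R" "\<And>r. r \<in> {1..R} \<Longrightarrow> d (x r) (y r) < e / real R"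
  shows "dsum_dist R d x y < e"
proof -
  have "dsum_dist R d x y < (\<Sum>r\<in>{1..R}. e / real R)"
    unfolding dsum_dist_def by (rule sum_strict_mono) (use assms in auto)
  also have "\<dots> = e" using assms(1) by simp
  finally show ?thesis .
qed

lemma dsum_op_funpow:
  assumes "x \<in> dsum_carrier R X"
  shows "(dsum_op R S ^^ n) x = (\<lambda>r. if r \<in> {1..R} then (S ^^ n) (x r) else 0)"
  by (induction n) (use assms in \<open>auto simp: dsum_carrier_def dsum_op_def\<close>)

lemma dsum_op_funpow_in_carrier:
  assumes "x \<in> dsum_carrier R X" "\<And>y. y \<in> X \<Longrightarrow> S y \<in> X"
  shows "(dsum_op R S ^^ n) x \<in> dsum_carrier R X"
proof -
  have "(S ^^ n) y \<in> X" if "y \<in> X" for y by (induction n) (use that assms(2) in auto)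
  then show ?thesis using assms(1) unfolding dsum_op_funpow[OF assms(1)] by (auto simp: dsum_carrier_def)
qed

lemma Wprod_0 [simp]: "Wprod g u m 0 = 1"
  by (simp add: Wprod_def)

lemma Wprod_Suc: "Wprod g u m (Suc n) = u (g m) * Wprod g u (g m) n"
proof (induction n)
  case 0
  then show ?case by (simp add: Wprod_def)
next
  case (Suc n)
  have snoc: "Wprod g u m (Suc k) = Wprod g u m k * u ((g ^^ Suc k) m)" for k m
    unfolding Wprod_def by (simp add: prod.nat_ivl_Suc')
  have "Wprod g u m (Suc (Suc n)) = u (g m) * (Wprod g u (g m) n * u ((g ^^ Suc n) (g m)))"
    by (simp add: snoc[where k = "Suc n"] Suc funpow_Suc_right del: funpow.simps)
  also have "Wprod g u (g m) n * u ((g ^^ Suc n) (g m)) = Wprod g u (g m) (Suc n)"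
    by (rule snoc[symmetric])
  finally show ?case .
qed

lemma pseudo_shift_funpow:
  assumes "1 \<le> m" "\<And>m. 1 \<le> m \<Longrightarrow> 1 \<le> g m"
  shows "(pseudo_shift g u ^^ n) x m = Wprod g u m n * x ((g ^^ n) m)"
  using assms(1)
proof (induction n arbitrary: m)
  case 0
  then show ?case by simp
next
  case (Suc n)
  have "(pseudo_shift g u ^^ Suc n) x m = u (g m) * (pseudo_shift g u ^^ n) x (g m)"
    using Suc.prems by (simp add: pseudo_shift_def)
  also have "\<dots> = u (g m) * (Wprod g u (g m) n * x ((g ^^ n) (g m)))"
    using Suc.IH[of "g m"] assms(2) Suc.prems by simp
  finally show ?case by (simp add: Wprod_Suc funpow_Suc_right del: funpow.simps)
qed

lemma pseudo_shift_funpow_at_0: "1 \<le> n \<Longrightarrow> (pseudo_shift g u ^^ n) x 0 = 0"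
  by (cases n) (auto simp: pseudo_shift_def)

locale pseudo_shift_family =
  fixes p :: real and N :: nat and f :: "nat \<Rightarrow> nat \<Rightarrow> nat"
    and w :: "nat \<Rightarrow> nat \<Rightarrow> 'k::real_normed_field"
  assumes p_ge_1: "1 \<le> p" and N_ge_1: "1 \<le> N"
    and data: "\<forall>i\<in>{1..N}. pseudo_shift_data (f i) (w i)"
begin

abbreviation T :: "nat \<Rightarrow> (nat \<Rightarrow> 'k) \<Rightarrow> nat \<Rightarrow> 'k" where
  "T i \<equiv> pseudo_shift (f i) (w i)"

abbreviation W :: "nat \<Rightarrow> nat \<Rightarrow> nat \<Rightarrow> 'k" where
  "W i m n \<equiv> Wprod (f i) (w i) m n"

lemma p_pos: "0 < p"
  using p_ge_1 by simp

lemma strict_mono_on_f: "i \<in> {1..N} \<Longrightarrow> strict_mono_on {1..} (f i)"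
  using data by (auto simp: pseudo_shift_data_def)

lemma Suc_le_f:
  assumes i: "i \<in> {1..N}" and m: "1 \<le> m"
  shows "Suc m \<le> f i m"
  using m
proof (induction m rule: dec_induct)
  case base
  have "1 < f i 1" using data i unfolding pseudo_shift_data_def by blast
  then show ?case by simp
next
  case (step k)
  have "f i k < f i (Suc k)" using strict_mono_on_f[OF i] step(1) by (auto simp: strict_mono_on_def)
  then show ?case using step(3) by simp
qed

lemma add_le_funpow_f:
  assumes "i \<in> {1..N}" "1 \<le> m"
  shows "m + n \<le> (f i ^^ n) m"
  by (induction n) (use Suc_le_f[OF assms(1)] assms(2) in \<open>auto intro: order.trans\<close>)

lemma inj_on_funpow_f:
  assumes i: "i \<in> {1..N}"
  shows "inj_on (f i ^^ n) {1..}"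
proof (induction n)
  case 0
  then show ?case by simp
next
  case (Suc n)
  have "1 \<le> (f i ^^ n) m" if "1 \<le> m" for m using that add_le_funpow_f[OF i that, of n] by simp
  then have "(f i ^^ n) ` {1..} \<subseteq> {1..}" by auto
  then show ?case
    using comp_inj_on[OF Suc inj_on_subset[OF strict_mono_on_imp_inj_on[OF strict_mono_on_f[OF i]]]]
    by (simp only: funpow.simps(2))
qed

lemma funpow_f_eq_imp_eq:
  "\<lbrakk>i \<in> {1..N}; 1 \<le> m; 1 \<le> m'; (f i ^^ n) m = (f i ^^ n) m'\<rbrakk> \<Longrightarrow> m = m'"
  using inj_on_funpow_f[of i n] by (auto simp: inj_on_def)

lemma T_funpow:
  "\<lbrakk>i \<in> {1..N}; 1 \<le> m\<rbrakk> \<Longrightarrow> (T i ^^ n) x m = W i m n * x ((f i ^^ n) m)"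
  by (rule pseudo_shift_funpow) (use Suc_le_f in force)+

lemma T_funpow_add:
  assumes i: "i \<in> {1..N}" and n: "1 \<le> n"
  shows "(T i ^^ n) (\<lambda>m. x m + y m) = (\<lambda>m. (T i ^^ n) x m + (T i ^^ n) y m)"
proof
  fix m
  show "(T i ^^ n) (\<lambda>m. x m + y m) m = (T i ^^ n) x m + (T i ^^ n) y m"
  proof (cases "m = 0")
    case True
    then show ?thesis by (simp only: pseudo_shift_funpow_at_0[OF n]) simp
  next
    case False
    then show ?thesis using T_funpow[OF i] by (simp add: algebra_simps)
  qed
qed

lemma T_funpow_eq_0:
  assumes i: "i \<in> {1..N}" and supp: "\<And>m. S < m \<Longrightarrow> x m = 0" and n: "S < n"
  shows "(T i ^^ n) x = 0"
proof
  fix m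
  show "(T i ^^ n) x m = 0 m"
    by (cases "m = 0")
      (use pseudo_shift_funpow_at_0[of n] T_funpow[OF i] add_le_funpow_f[OF i, of m n] supp n in auto)
qed

lemma W_nonzero:
  assumes i: "i \<in> {1..N}" and m: "1 \<le> m"
  shows "W i m n \<noteq> 0"
  using m
proof (induction n arbitrary: m)
  case (Suc n)
  have "w i (f i m) \<noteq> 0" using data i Suc.prems by (auto simp: pseudo_shift_data_def)
  then show ?case using Suc.IH[of "f i m"] Suc_le_f[OF i Suc.prems] by (simp add: Wprod_Suc)
qed simp

lemma weight_bound:
  assumes "i \<in> {1..N}"
  obtains C where "1 \<le> C" "\<And>m. 1 \<le> m \<Longrightarrow> norm (w i (f i m)) \<le> C"
proof -
  obtain B where "\<forall>m\<ge>1. norm (w i (f i m)) \<le> B"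
    using data assms unfolding pseudo_shift_data_def by blast
  then show ?thesis using that[of "max B 1"] by force
qed

lemma norm_W_le:
  assumes i: "i \<in> {1..N}" and C: "1 \<le> C" "\<And>m. 1 \<le> m \<Longrightarrow> norm (w i (f i m)) \<le> C"
    and m: "1 \<le> m"
  shows "norm (W i m n) \<le> C ^ n"
  using m
proof (induction n arbitrary: m)
  case (Suc n)
  have "norm (W i m (Suc n)) = norm (w i (f i m)) * norm (W i (f i m) n)"
    by (simp add: Wprod_Suc norm_mult)
  also have "\<dots> \<le> C * C ^ n"
    using Suc.IH[of "f i m"] Suc_le_f[OF i Suc.prems] C(1) C(2)[OF Suc.prems]
    by (intro mult_mono) auto
  finally show ?case by simp
qed simp

lemma T_in_lp_space:
  assumes i: "i \<in> {1..N}" and x: "x \<in> lp_space p"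
  shows "T i x \<in> lp_space p"
proof -
  obtain C where C: "1 \<le> C" "\<And>m. 1 \<le> m \<Longrightarrow> norm (w i (f i m)) \<le> C"
    using weight_bound[OF i] by blast
  have "summable (\<lambda>m. if m = 0 then 0 else norm (x (f i m)) powr p)"
    using x strict_mono_on_imp_inj_on[OF strict_mono_on_f[OF i]]
    by (intro summable_comp_inj_on) (auto simp: lp_space_def)
  then have dominant: "summable (\<lambda>m. C powr p * (if m = 0 then 0 else norm (x (f i m)) powr p))"
    by (rule summable_mult)
  have bound: "norm (T i x m) powr p \<le> C powr p * (if m = 0 then 0 else norm (x (f i m)) powr p)" for m
  proof (cases "m = 0")
    case False
    have "norm (T i x m) \<le> C * norm (x (f i m))"
      using False C(2)[of m] by (simp add: pseudo_shift_def norm_mult mult_right_mono)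
    then have "norm (T i x m) powr p \<le> (C * norm (x (f i m))) powr p"
      using p_pos by (intro powr_mono2) auto
    then show ?thesis using False C(1) by (simp add: powr_mult)
  qed (simp add: pseudo_shift_def)
  have "summable (\<lambda>m. norm (T i x m) powr p)"
    by (rule summable_comparison_test'[OF dominant]) (use bound in simp)
  then show ?thesis unfolding lp_space_def by (simp add: pseudo_shift_def)
qed

lemma T_funpow_in_lp_space: "\<lbrakk>i \<in> {1..N}; x \<in> lp_space p\<rbrakk> \<Longrightarrow> (T i ^^ n) x \<in> lp_space p"
  by (induction n) (auto simp: T_in_lp_space)

end

section \<open>Good exponents\<close>

definition block :: "nat \<Rightarrow> nat \<Rightarrow> 'a::real_normed_algebra_1" where
  "block M m = (if m \<in> {1..M} then 1 else 0)"

definition ramp :: "nat \<Rightarrow> nat \<Rightarrow> 'a::real_normed_algebra_1" where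
  "ramp M m = (if m \<in> {1..M} then of_nat m else 0)"

lemma block_in_lp_space: "block M \<in> lp_space p"
  by (rule lp_space_finite_support[of "{1..M}"]) (auto simp: block_def)

lemma ramp_in_lp_space: "ramp M \<in> lp_space p"
  by (rule lp_space_finite_support[of "{1..M}"]) (auto simp: ramp_def)

lemma norm_greater_of_near_one:
  fixes P :: "'a::real_normed_algebra_1"
  assumes "norm (P - 1) < \<eta>"
  shows "1 - \<eta> < norm P"
  using norm_triangle_ineq[of P "1 - P"] norm_minus_commute[of P 1] assms by simp

lemma less_norm_of_approx_inverse:
  fixes W a :: "'a::real_normed_field"
  assumes near: "norm (W * a - 1) < \<eta>" and a: "norm a < \<eta>" and \<eta>: "\<eta> * (L + 1) \<le> 1"
  shows "L < norm W"
proof -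
  have "\<eta> * L \<le> 1 - \<eta>" using \<eta> by (simp add: algebra_simps)
  also have "1 - \<eta> < norm (W * a)" by (rule norm_greater_of_near_one[OF near])
  also have "\<dots> \<le> norm W * \<eta>" using a by (simp add: norm_mult mult_left_mono)
  finally show ?thesis using le_less_trans[OF norm_ge_zero a] by (simp add: mult.commute)
qed

lemma norm_divide_less_of_near_one:
  fixes P Q :: "'a::real_normed_field"
  assumes P: "norm (P - 1) < \<eta>" and Q: "norm Q < \<eta>" and \<eta>: "\<eta> \<le> 1 / 2"
  shows "norm (Q / P) < 2 * \<eta>"
proof -
  have "norm (Q / P) = norm Q / norm P" by (simp add: norm_divide)
  also have "\<dots> < \<eta> / (1 / 2)"
    using norm_greater_of_near_one[OF P] Q \<eta> by (intro frac_less) auto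
  finally show ?thesis by simp
qed

lemma norm_divide_minus_one_less:
  fixes P Q :: "'a::real_normed_field"
  assumes P: "norm (P - 1) < \<eta>" and Q: "norm (Q - 1) < \<eta>" and \<eta>: "\<eta> \<le> 1 / 2"
  shows "norm (Q / P - 1) < 4 * \<eta>"
proof -
  have P_large: "1 / 2 < norm P" using norm_greater_of_near_one[OF P] \<eta> by simp
  then have "Q / P - 1 = (Q - P) / P" by (auto simp: diff_divide_distrib)
  then have "norm (Q / P - 1) = norm ((Q - 1) - (P - 1)) / norm P" by (simp add: norm_divide)
  also have "\<dots> < (2 * \<eta>) / (1 / 2)"
    using norm_triangle_ineq4[of "Q - 1" "P - 1"] P Q P_large by (intro frac_less) auto
  finally show ?thesis by simp
qed

lemma eq_of_near_ratio:
  fixes \<rho> P :: "'a::real_normed_field"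
  assumes \<rho>: "norm (\<rho> - 1) < 4 * \<eta>" and P: "norm (P - of_nat m) < \<eta>"
    and \<rho>P: "norm (\<rho> * P - of_nat m') < \<eta>" and \<eta>: "\<eta> * (8 * (real m + 1)) \<le> 1"
  shows "m = m'"
proof -
  have \<eta>_pos: "0 < \<eta>" using le_less_trans[OF norm_ge_zero P] .
  have "norm \<rho> \<le> norm (\<rho> - 1) + 1" using norm_triangle_ineq[of "\<rho> - 1" 1] by simp
  also have "\<dots> \<le> 3"
  proof -
    have "\<eta> * (8 * (real m + 1)) = 8 * \<eta> + 8 * (\<eta> * real m)" by (simp add: algebra_simps)
    moreover have "0 \<le> \<eta> * real m" using \<eta>_pos by simp
    ultimately show ?thesis using \<rho> \<eta> by linarith
  qed
  finally have \<rho>_bound: "norm \<rho> \<le> 3" .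
  have split: "(of_nat m' - of_nat m :: 'a) = (of_nat m' - \<rho> * P) + \<rho> * (P - of_nat m) + (\<rho> - 1) * of_nat m"
    by (simp add: algebra_simps)
  have "norm (of_nat m' - of_nat m :: 'a)
      \<le> norm (of_nat m' - \<rho> * P) + norm (\<rho> * (P - of_nat m)) + norm ((\<rho> - 1) * of_nat m)"
    unfolding split by (rule order_trans[OF norm_triangle_ineq add_right_mono[OF norm_triangle_ineq]])
  also have "\<dots> \<le> \<eta> + 3 * \<eta> + 4 * \<eta> * real m"
  proof (intro add_mono)
    show "norm (of_nat m' - \<rho> * P) \<le> \<eta>" using \<rho>P by (simp add: norm_minus_commute)
    show "norm (\<rho> * (P - of_nat m)) \<le> 3 * \<eta>"
      unfolding norm_mult using \<rho>_bound P by (intro mult_mono) auto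
    show "norm ((\<rho> - 1) * of_nat m) \<le> 4 * \<eta> * real m"
      unfolding norm_mult norm_of_nat using \<rho> by (intro mult_right_mono) auto
  qed
  also have "\<dots> \<le> 1 / 2" using \<eta> by (simp add: algebra_simps)
  finally have "norm (of_int (int m' - int m) :: 'a) \<le> 1 / 2" by simp
  then have "\<bar>real m' - real m\<bar> \<le> 1 / 2" by (simp only: norm_of_int)
  then show ?thesis by linarith
qed

context pseudo_shift_family
begin

text \<open>Condition (b) of (iv) at a single exponent \<open>n\<close>.\<close>

definition ratio_condition :: "real \<Rightarrow> nat \<Rightarrow> nat \<Rightarrow> bool" where
  "ratio_condition e M n \<longleftrightarrow> (\<forall>i\<in>{1..N}. \<forall>l\<in>{1..N}. i \<noteq> l \<longrightarrow>
      (\<forall>m\<in>{1..M}. \<forall>m'. m' \<ge> 1 \<longrightarrow> m' \<notin> {1..M} \<longrightarrow>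
          (f l ^^ n) m = (f i ^^ n) m' \<longrightarrow> norm (W i m' n / W l m n) < e) \<and>
      (\<forall>m\<in>{1..M}. \<forall>m'\<in>{1..M}.
          (f l ^^ n) m = (f i ^^ n) m' \<longrightarrow> m = m' \<and> norm (W i m' n / W l m n - 1) < e))"

definition good_exponent :: "real \<Rightarrow> nat \<Rightarrow> real \<Rightarrow> nat \<Rightarrow> bool" where
  "good_exponent e M L n \<longleftrightarrow> (\<forall>i\<in>{1..N}. \<forall>m\<in>{1..M}. L < norm (W i m n)) \<and> ratio_condition e M n"

definition has_good_exponents :: bool where
  "has_good_exponents \<longleftrightarrow> (\<forall>e>0. \<forall>M\<ge>1. \<forall>L. \<exists>n. good_exponent e M L n)"

definition weight_condition :: bool where
  "weight_condition \<longleftrightarrow> (\<exists>nk::nat \<Rightarrow> nat. strict_mono nk \<and> (\<forall>k. 0 < nk k) \<and>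
      (\<forall>i\<in>{1..N}. \<forall>m\<ge>1. filterlim (\<lambda>k. norm (W i m (nk k))) at_top sequentially) \<and>
      (\<forall>e>0. \<forall>K M. M \<ge> 1 \<longrightarrow> (\<exists>k\<ge>K. ratio_condition e M (nk k))))"

lemma ratio_conditionD:
  assumes "ratio_condition e M n" "i \<in> {1..N}" "l \<in> {1..N}" "i \<noteq> l" "m \<in> {1..M}"
    and "(f l ^^ n) m = (f i ^^ n) m'"
  shows "\<lbrakk>1 \<le> m'; m' \<notin> {1..M}\<rbrakk> \<Longrightarrow> norm (W i m' n / W l m n) < e"
    and "m' \<in> {1..M} \<Longrightarrow> m = m' \<and> norm (W i m' n / W l m n - 1) < e"
  using assms unfolding ratio_condition_def by blast+

lemma ratio_condition_mono:
  assumes ratio: "ratio_condition e M n" and e: "e \<le> e'" and M: "M' \<le> M"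
  shows "ratio_condition e' M' n"
  unfolding ratio_condition_def
proof (intro ballI impI allI conjI)
  fix i l m m' assume il: "i \<in> {1..N}" "l \<in> {1..N}" "i \<noteq> l" and m: "m \<in> {1..M'}"
  then have mM: "m \<in> {1..M}" using M by auto
  {
    assume m': "1 \<le> m'" "m' \<notin> {1..M'}" and eq: "(f l ^^ n) m = (f i ^^ n) m'"
    show "norm (W i m' n / W l m n) < e'"
    proof (cases "m' \<in> {1..M}")
      case True
      then show ?thesis using ratio_conditionD(2)[OF ratio il mM eq] m m' by simp
    next
      case False
      then show ?thesis using ratio_conditionD(1)[OF ratio il mM eq m'(1)] e by simp
    qed
  next
    assume "m' \<in> {1..M'}" and eq: "(f l ^^ n) m = (f i ^^ n) m'"
    then have "m' \<in> {1..M}" using M by auto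
    from ratio_conditionD(2)[OF ratio il mM eq this]
    show "m = m'" "norm (W i m' n / W l m n - 1) < e'" using e by auto
  }
qed

lemma good_exponent_mono:
  assumes "good_exponent e M L n" "e \<le> e'" "M' \<le> M" "L' \<le> L"
  shows "good_exponent e' M' L' n"
proof -
  have "L' < norm (W i m n)" if "i \<in> {1..N}" "m \<in> {1..M'}" for i m
  proof -
    have "m \<in> {1..M}" using that(2) assms(3) by simp
    then have "L < norm (W i m n)" using assms(1) that(1) unfolding good_exponent_def by blast
    then show ?thesis using assms(4) by simp
  qed
  then show ?thesis
    using assms(1) ratio_condition_mono[OF _ assms(2,3)] unfolding good_exponent_def by blast
qed

text \<open>The sequences \<open>block M\<close> and \<open>ramp M\<close> serve as test vectors: small common approximate
  preimages of them under \<open>T\<^sub>1\<^sup>n, \<dots>, T\<^sub>N\<^sup>n\<close> force \<open>n\<close> to be a good exponent. The ramp detects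
  the coincidences \<open>f\<^sub>l\<^sup>n(m) = f\<^sub>i\<^sup>n(m')\<close> with \<open>m \<noteq> m'\<close> inside the block.\<close>

definition shifts_close :: "real \<Rightarrow> nat \<Rightarrow> (nat \<Rightarrow> 'k) \<Rightarrow> (nat \<Rightarrow> 'k) \<Rightarrow> bool" where
  "shifts_close \<eta> n a x \<longleftrightarrow> (\<forall>i\<in>{1..N}. \<forall>m\<ge>1. norm ((T i ^^ n) a m - x m) < \<eta>)"

definition common_approx_preimages :: bool where
  "common_approx_preimages \<longleftrightarrow> (\<forall>M\<ge>1. \<forall>\<eta>>0. \<exists>n a b. (\<forall>j. norm (a j) < \<eta>) \<and>
      shifts_close \<eta> n a (block M) \<and> shifts_close \<eta> n b (ramp M))"

lemma shifts_closeD: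
  "\<lbrakk>shifts_close \<eta> n a x; i \<in> {1..N}; 1 \<le> m\<rbrakk> \<Longrightarrow> norm (W i m n * a ((f i ^^ n) m) - x m) < \<eta>"
  unfolding shifts_close_def by (simp add: T_funpow)

lemma ratio_near_one_if_shifts_close:
  assumes a: "shifts_close \<eta> n a (block M)" and \<eta>: "\<eta> \<le> 1 / 2"
    and il: "i \<in> {1..N}" "l \<in> {1..N}" and m: "m \<in> {1..M}" "m' \<in> {1..M}"
    and eq: "(f l ^^ n) m = (f i ^^ n) m'"
  shows "norm (W i m' n / W l m n - 1) < 4 * \<eta>"
proof -
  define j where "j = (f l ^^ n) m"
  have P: "norm (W l m n * a j - 1) < \<eta>" and Q: "norm (W i m' n * a j - 1) < \<eta>"
    using shifts_closeD[OF a il(2), of m] shifts_closeD[OF a il(1), of m'] m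
    unfolding j_def eq by (auto simp: block_def)
  have "a j \<noteq> 0" using norm_greater_of_near_one[OF P] \<eta> by auto
  then have "W i m' n / W l m n = (W i m' n * a j) / (W l m n * a j)" by simp
  then show ?thesis using norm_divide_minus_one_less[OF P Q \<eta>] by simp
qed

lemma ratio_small_if_shifts_close:
  assumes a: "shifts_close \<eta> n a (block M)" and \<eta>: "\<eta> \<le> 1 / 2"
    and il: "i \<in> {1..N}" "l \<in> {1..N}" and m: "m \<in> {1..M}" "1 \<le> m'" "m' \<notin> {1..M}"
    and eq: "(f l ^^ n) m = (f i ^^ n) m'"
  shows "norm (W i m' n / W l m n) < 2 * \<eta>"
proof -
  define j where "j = (f l ^^ n) m"
  have P: "norm (W l m n * a j - 1) < \<eta>" and Q: "norm (W i m' n * a j) < \<eta>"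
    using shifts_closeD[OF a il(2), of m] shifts_closeD[OF a il(1) m(2)] m
    unfolding j_def eq by (auto simp: block_def)
  have "a j \<noteq> 0" using norm_greater_of_near_one[OF P] \<eta> by auto
  then have "W i m' n / W l m n = (W i m' n * a j) / (W l m n * a j)" by simp
  then show ?thesis using norm_divide_less_of_near_one[OF P Q \<eta>] by simp
qed

lemma eq_if_shifts_close_ramp:
  assumes b: "shifts_close \<eta> n b (ramp M)" and \<eta>: "\<eta> * (8 * (real M + 1)) \<le> 1"
    and near: "norm (W i m' n / W l m n - 1) < 4 * \<eta>"
    and il: "i \<in> {1..N}" "l \<in> {1..N}" and m: "m \<in> {1..M}" "m' \<in> {1..M}"
    and eq: "(f l ^^ n) m = (f i ^^ n) m'"
  shows "m = m'"
proof -
  define j where "j = (f l ^^ n) m"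
  have P: "norm (W l m n * b j - of_nat m) < \<eta>" and Q: "norm (W i m' n * b j - of_nat m') < \<eta>"
    using shifts_closeD[OF b il(2), of m] shifts_closeD[OF b il(1), of m'] m
    unfolding j_def eq by (auto simp: ramp_def)
  have "W l m n \<noteq> 0" using W_nonzero[OF il(2)] m by simp
  then have factor: "W i m' n * b j = (W i m' n / W l m n) * (W l m n * b j)" by simp
  have "0 < \<eta>" using le_less_trans[OF norm_ge_zero P] .
  then have "\<eta> * (8 * (real m + 1)) \<le> 1"
    using m by (intro order_trans[OF _ \<eta>] mult_left_mono) auto
  then show "m = m'" by (rule eq_of_near_ratio[OF near P Q[unfolded factor]])
qed

lemma good_exponent_of_approx_preimages:
  assumes \<eta>: "\<eta> \<le> e / 4" "\<eta> * (8 * (real M + 1)) \<le> 1" "\<eta> * (L + 1) \<le> 1"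
    and small: "\<forall>j. norm (a j) < \<eta>"
    and a: "shifts_close \<eta> n a (block M)" and b: "shifts_close \<eta> n b (ramp M)"
  shows "good_exponent e M L n"
proof -
  have "0 < \<eta>" using le_less_trans[OF norm_ge_zero small[rule_format]] .
  then have "0 \<le> \<eta> * (8 * real M)" by simp
  then have \<eta>_half: "\<eta> \<le> 1 / 2" using \<eta>(2) by (simp add: algebra_simps)
  have e: "2 * \<eta> < e" "4 * \<eta> \<le> e" using \<eta>(1) \<open>0 < \<eta>\<close> by linarith+
  have "ratio_condition e M n"
    unfolding ratio_condition_def
  proof (intro ballI impI allI conjI)
    fix i l m m'
    assume il: "i \<in> {1..N}" "l \<in> {1..N}" and m: "m \<in> {1..M}"
    {
      assume "1 \<le> m'" "m' \<notin> {1..M}" "(f l ^^ n) m = (f i ^^ n) m'"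
      from ratio_small_if_shifts_close[OF a \<eta>_half il m this] show "norm (W i m' n / W l m n) < e"
        using e(1) by (rule less_trans)
    next
      assume m': "m' \<in> {1..M}" "(f l ^^ n) m = (f i ^^ n) m'"
      note near = ratio_near_one_if_shifts_close[OF a \<eta>_half il m m']
      from eq_if_shifts_close_ramp[OF b \<eta>(2) near il m m'] show "m = m'" .
      from near show "norm (W i m' n / W l m n - 1) < e"
        using e(2) by (rule less_le_trans)
    }
  qed
  moreover have "L < norm (W i m n)" if "i \<in> {1..N}" "m \<in> {1..M}" for i m
    using less_norm_of_approx_inverse[OF _ small[rule_format, of "(f i ^^ n) m"] \<eta>(3)]
      shifts_closeD[OF a that(1), of m] that(2) by (simp add: block_def)
  ultimately show ?thesis unfolding good_exponent_def by blast
qed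

lemma has_good_exponents_if_common_approx_preimages:
  assumes common_approx_preimages
  shows has_good_exponents
  unfolding has_good_exponents_def
proof (intro allI impI)
  fix e :: real and M :: nat and L :: real
  assume e: "0 < e" and M: "1 \<le> M"
  define D where "D = 8 * (real M + 1) + \<bar>L\<bar> + 1"
  define \<eta> where "\<eta> = min (e / 4) (1 / D)"
  have D: "0 < D" unfolding D_def by simp
  have \<eta>: "0 < \<eta>" "\<eta> \<le> e / 4" "\<eta> * (8 * (real M + 1)) \<le> 1" "\<eta> * (L + 1) \<le> 1"
  proof -
    have "\<eta> \<le> 1 / D" unfolding \<eta>_def by simp
    then have "\<eta> * (8 * (real M + 1) + \<bar>L\<bar> + 1) \<le> 1" using D unfolding D_def by (simp add: le_divide_eq)
    then have sum: "\<eta> * (8 * (real M + 1)) + \<eta> * \<bar>L\<bar> + \<eta> \<le> 1" by (simp add: distrib_left)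
    show "0 < \<eta>" unfolding \<eta>_def using e D by simp
    then have "\<eta> * L \<le> \<eta> * \<bar>L\<bar>" "0 \<le> \<eta> * \<bar>L\<bar>" "0 \<le> \<eta> * (8 * (real M + 1))"
      by (simp_all add: mult_left_mono)
    moreover have "\<eta> * (L + 1) = \<eta> * L + \<eta>" by (simp add: distrib_left)
    ultimately show "\<eta> * (L + 1) \<le> 1" using sum by linarith
    show "\<eta> * (8 * (real M + 1)) \<le> 1" using sum \<open>0 \<le> \<eta> * \<bar>L\<bar>\<close> \<open>0 < \<eta>\<close> by linarith
    show "\<eta> \<le> e / 4" unfolding \<eta>_def by simp
  qed
  then obtain n a b where "\<forall>j. norm (a j) < \<eta>" "shifts_close \<eta> n a (block M)" "shifts_close \<eta> n b (ramp M)"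
    using assms M unfolding common_approx_preimages_def by meson
  then show "\<exists>n. good_exponent e M L n" by (intro exI good_exponent_of_approx_preimages[OF \<eta>(2-4)])
qed


text \<open>Since the weights are bounded by some \<open>C\<close>, the bound \<open>\<bar>W\<^sub>1(1, n)\<bar> > (C + 1)\<^sup>B\<close> forces \<open>n > B\<close>.\<close>

lemma good_exponent_unbounded:
  assumes has_good_exponents "0 < e" "1 \<le> M"
  shows "\<exists>n>B. good_exponent e M L n"
proof -
  have one: "1 \<in> {1..N}" "1 \<in> {1..M}" using N_ge_1 assms(3) by auto
  obtain C where C: "1 \<le> C" "\<And>m. 1 \<le> m \<Longrightarrow> norm (w 1 (f 1 m)) \<le> C"
    using weight_bound[OF one(1)] by blast
  obtain n where n: "good_exponent e M (max L ((C + 1) ^ B)) n"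
    using assms(1,2,3) unfolding has_good_exponents_def by blast
  then have "(C + 1) ^ B < norm (W 1 1 n)" using one unfolding good_exponent_def by fastforce
  also have "\<dots> \<le> C ^ n" by (rule norm_W_le[OF one(1) C order_refl])
  also have "\<dots> \<le> (C + 1) ^ n" using C(1) by (intro power_mono) auto
  finally have "B < n" using C(1) by (intro power_less_imp_less_exp[of "C + 1"]) simp_all
  moreover have "good_exponent e M L n" by (rule good_exponent_mono[OF n]) auto
  ultimately show ?thesis by blast
qed

definition good_sequence :: "(nat \<Rightarrow> nat) \<Rightarrow> bool" where
  "good_sequence nk \<longleftrightarrow> strict_mono nk \<and> (\<forall>k. 0 < nk k) \<and>
     (\<forall>k. good_exponent (1 / (real k + 1)) (k + 1) (real k + 1) (nk k))"

lemma good_sequence_exists: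
  assumes has_good_exponents
  obtains nk where "good_sequence nk"
proof -
  have "\<forall>k a. \<exists>n>a. good_exponent (1 / (real k + 1)) (k + 1) (real k + 1) n"
    using good_exponent_unbounded[OF assms] by simp
  then obtain g where g: "\<And>k a. a < g k a \<and> good_exponent (1 / (real k + 1)) (k + 1) (real k + 1) (g k a)"
    by metis
  define nk where "nk = rec_nat (g 0 0) (\<lambda>k. g (Suc k))"
  have nk_0: "nk 0 = g 0 0" and nk_Suc: "nk (Suc k) = g (Suc k) (nk k)" for k
    by (simp_all add: nk_def)
  have mono: "strict_mono nk"
    by (rule strict_mono_Suc_iff[THEN iffD2]) (use g nk_Suc in auto)
  have "good_exponent (1 / (real k + 1)) (k + 1) (real k + 1) (nk k)" for k
  proof (cases k)
    case 0
    then show ?thesis using g[of 0 0] nk_0 by simp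
  next
    case (Suc j)
    then show ?thesis using g[of "nk j" "Suc j"] nk_Suc[of j] by simp
  qed
  moreover have "0 < nk k" for k
    using g[of 0 0] nk_0 strict_mono_less_eq[OF mono, of 0 k] by simp
  ultimately show ?thesis using that mono unfolding good_sequence_def by blast
qed

lemma weight_condition_if_good_sequence:
  assumes good: "good_sequence nk"
  shows weight_condition
  unfolding weight_condition_def
proof (intro exI conjI)
  show "strict_mono nk" "\<forall>k. 0 < nk k" using good unfolding good_sequence_def by auto
  have good_k: "good_exponent (1 / (real k + 1)) (k + 1) (real k + 1) (nk k)" for k
    using good unfolding good_sequence_def by blast
  show "\<forall>i\<in>{1..N}. \<forall>m\<ge>1. filterlim (\<lambda>k. norm (W i m (nk k))) at_top sequentially"
  proof (intro ballI allI impI)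
    fix i m assume i: "i \<in> {1..N}" and m: "(1::nat) \<le> m"
    have "real k + 1 < norm (W i m (nk k))" if "m \<le> k" for k
      using good_k[of k] i m that unfolding good_exponent_def by auto
    then have "eventually (\<lambda>k. real k \<le> norm (W i m (nk k))) sequentially"
      unfolding eventually_sequentially by (intro exI[of _ m]) force
    then show "filterlim (\<lambda>k. norm (W i m (nk k))) at_top sequentially"
      by (rule filterlim_at_top_mono[OF filterlim_real_sequentially])
  qed
  show "\<forall>e>0. \<forall>K M. 1 \<le> M \<longrightarrow> (\<exists>k\<ge>K. ratio_condition e M (nk k))"
  proof (intro allI impI)
    fix e :: real and K M :: nat assume e: "0 < e" and "1 \<le> M"
    obtain k0 :: nat where k0: "1 / e < real k0" using reals_Archimedean2 by blast
    define k where "k = max k0 (max K M)"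
    have "real k0 \<le> real k" unfolding k_def by simp
    then have "1 / e < real k + 1" using k0 by linarith
    then have "1 / (real k + 1) \<le> e" using e by (simp add: field_simps)
    then have "ratio_condition e M (nk k)"
      using good_k[of k] ratio_condition_mono unfolding good_exponent_def k_def by fastforce
    then show "\<exists>k\<ge>K. ratio_condition e M (nk k)" unfolding k_def by (intro exI[of _ k]) (auto simp: k_def)
  qed
qed

lemma has_good_exponents_if_weight_condition:
  assumes weight_condition
  shows has_good_exponents
  unfolding has_good_exponents_def
proof (intro allI impI)
  fix e L :: real and M :: nat assume e: "0 < e" and M: "1 \<le> M"
  obtain nk where lim: "\<forall>i\<in>{1..N}. \<forall>m\<ge>1. filterlim (\<lambda>k. norm (W i m (nk k))) at_top sequentially"
    and ratio: "\<forall>e>0. \<forall>K M. 1 \<le> M \<longrightarrow> (\<exists>k\<ge>K. ratio_condition e M (nk k))"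
    using assms unfolding weight_condition_def by blast
  have "eventually (\<lambda>k. \<forall>i\<in>{1..N}. \<forall>m\<in>{1..M}. L < norm (W i m (nk k))) sequentially"
    using lim unfolding filterlim_at_top_dense by (auto intro!: eventually_ball_finite)
  then obtain K where K: "\<And>k. K \<le> k \<Longrightarrow> \<forall>i\<in>{1..N}. \<forall>m\<in>{1..M}. L < norm (W i m (nk k))"
    unfolding eventually_sequentially by blast
  obtain k where "K \<le> k" "ratio_condition e M (nk k)" using ratio e M by blast
  then have "good_exponent e M L (nk k)" using K unfolding good_exponent_def by blast
  then show "\<exists>n. good_exponent e M L n" ..
qed

end

section \<open>The dynamical properties force good exponents\<close>

lemma open_in_ms_coordinate_ball:
  assumes p: "0 < p"
  shows "open_in_ms (dsum_carrier R (lp_space p)) (dsum_dist R (lp_dist p))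
           {u \<in> dsum_carrier R (lp_space p). \<exists>\<eta>'<\<eta>. \<forall>r\<in>{1..R}. \<forall>m. norm (u r m - x r m) \<le> \<eta>'}"
  unfolding open_in_ms_def
proof (intro conjI ballI)
  fix u assume "u \<in> {u \<in> dsum_carrier R (lp_space p). \<exists>\<eta>'<\<eta>. \<forall>r\<in>{1..R}. \<forall>m. norm (u r m - x r m) \<le> \<eta>'}"
  then obtain \<eta>' where u: "u \<in> dsum_carrier R (lp_space p)" "\<eta>' < \<eta>"
    and close: "\<forall>r\<in>{1..R}. \<forall>m. norm (u r m - x r m) \<le> \<eta>'" by blast
  show "\<exists>e>0. \<forall>y\<in>dsum_carrier R (lp_space p). dsum_dist R (lp_dist p) u y < e \<longrightarrow>
      y \<in> {u \<in> dsum_carrier R (lp_space p). \<exists>\<eta>'<\<eta>. \<forall>r\<in>{1..R}. \<forall>m. norm (u r m - x r m) \<le> \<eta>'}"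
  proof (intro exI[of _ "\<eta> - \<eta>'"] conjI ballI impI)
    fix y assume y: "y \<in> dsum_carrier R (lp_space p)" and d: "dsum_dist R (lp_dist p) u y < \<eta> - \<eta>'"
    have "norm (y r m - x r m) \<le> \<eta>' + dsum_dist R (lp_dist p) u y" if "r \<in> {1..R}" for r m
    proof -
      have "norm (u r m - x r m) \<le> \<eta>'" using close that by blast
      then show ?thesis
        using norm_triangle_ineq4[of "u r m - x r m" "u r m - y r m"] norm_le_dsum_dist[OF u(1) y that p, of m]
        by simp
    qed
    then show "y \<in> {u \<in> dsum_carrier R (lp_space p). \<exists>\<eta>'<\<eta>. \<forall>r\<in>{1..R}. \<forall>m. norm (u r m - x r m) \<le> \<eta>'}"
      using y d by (intro CollectI conjI exI[of _ "\<eta>' + dsum_dist R (lp_dist p) u y"]) auto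
  qed (use u in simp)
qed auto

lemma norm_diff_less_of_dsum_dist_less:
  assumes "x \<in> dsum_carrier R (lp_space p)" "z \<in> dsum_carrier R (lp_space p)" "y \<in> dsum_carrier R (lp_space p)"
    and "r \<in> {1..R}" "0 < p"
    and "dsum_dist R (lp_dist p) x y < \<eta> / 2" "dsum_dist R (lp_dist p) z y < \<eta> / 2"
  shows "norm (x r m - z r m) < \<eta>"
  using norm_le_dsum_dist[OF assms(1,3,4,5), of m] norm_le_dsum_dist[OF assms(2,3,4,5), of m] assms(6,7)
    norm_triangle_ineq4[of "x r m - y r m" "z r m - y r m"] by simp

definition test_pair :: "nat \<Rightarrow> nat \<Rightarrow> nat \<Rightarrow> 'a::real_normed_algebra_1" where
  "test_pair M r = (if r = 1 then block M else if r = 2 then ramp M else 0)"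

lemma test_pair_in_dsum_carrier: "test_pair M \<in> dsum_carrier 2 (lp_space p)"
  unfolding test_pair_def dsum_carrier_def using block_in_lp_space ramp_in_lp_space by auto

lemma zero_in_dsum_carrier: "0 \<in> dsum_carrier R (lp_space p)"
  unfolding dsum_carrier_def using zero_in_lp_space by (auto simp: zero_fun_def)

lemma
  assumes "in_conv_hull N v y"
  shows in_conv_hull_lp_space: "\<lbrakk>\<And>j. j \<in> {1..N} \<Longrightarrow> v j \<in> lp_space p; 0 < p\<rbrakk> \<Longrightarrow> y \<in> lp_space p"
    and norm_in_conv_hull_diff_le:
      "(\<And>j. j \<in> {1..N} \<Longrightarrow> norm (v j m - x m) \<le> D) \<Longrightarrow> norm (y m - x m) \<le> D"
proof -
  obtain c where c: "\<forall>j\<in>{1..N}. 0 \<le> c j" "(\<Sum>j\<in>{1..N}. c j) = 1"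
    and y: "y = (\<lambda>a. \<Sum>j\<in>{1..N}. c j *\<^sub>R v j a)"
    using assms unfolding in_conv_hull_def by blast
  show "\<lbrakk>\<And>j. j \<in> {1..N} \<Longrightarrow> v j \<in> lp_space p; 0 < p\<rbrakk> \<Longrightarrow> y \<in> lp_space p"
    unfolding y by (rule lp_space_sum) (auto intro: lp_space_scaleR)
  assume D: "\<And>j. j \<in> {1..N} \<Longrightarrow> norm (v j m - x m) \<le> D"
  have "(\<Sum>j\<in>{1..N}. c j *\<^sub>R x m) = x m" using c(2) by (simp add: scaleR_sum_left[symmetric])
  then have "y m - x m = (\<Sum>j\<in>{1..N}. c j *\<^sub>R (v j m - x m))"
    unfolding y by (simp add: scaleR_diff_right sum_subtractf)
  then have "norm (y m - x m) \<le> (\<Sum>j\<in>{1..N}. c j * norm (v j m - x m))"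
    using norm_sum[of "\<lambda>j. c j *\<^sub>R (v j m - x m)" "{1..N}"] c(1) by simp
  also have "\<dots> \<le> (\<Sum>j\<in>{1..N}. c j * D)" using c(1) D by (intro sum_mono mult_left_mono) auto
  also have "\<dots> = D" using c(2) by (simp add: sum_distrib_right[symmetric])
  finally show "norm (y m - x m) \<le> D" .
qed

text \<open>The limits of \<open>S\<^sub>i\<^sup>n\<^sup>k R\<^sub>k v\<close> lie in the convex hull of the components of \<open>v\<close>, and \<open>v\<close> can be
  chosen close to the diagonal point of \<open>x\<close>.\<close>

lemma hc_limits_near:
  assumes W0: "W0 \<subseteq> dsum_carrier N (lp_space p)"
    and diag: "\<forall>y\<in>lp_space p. \<forall>e>0. \<exists>v\<in>W0. dsum_dist N (lp_dist p) v (\<lambda>r. if r \<in> {1..N} then y else 0) < e"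
    and lim: "\<forall>v\<in>W0. \<forall>i\<in>{1..N}. \<exists>y. in_conv_hull N v y \<and> conv_ms (lp_dist p) (\<lambda>k. (S i ^^ nk k) (Rk k v)) y"
    and x: "x \<in> lp_space p" and \<eta>: "0 < \<eta>" and p: "0 < p"
  obtains v Y where "v \<in> W0" "\<And>i. i \<in> {1..N} \<Longrightarrow> Y i \<in> lp_space p"
    "\<And>i m. i \<in> {1..N} \<Longrightarrow> norm (Y i m - x m) < \<eta>"
    "\<And>i. i \<in> {1..N} \<Longrightarrow> conv_ms (lp_dist p) (\<lambda>k. (S i ^^ nk k) (Rk k v)) (Y i)"
proof -
  define x_diag where "x_diag = (\<lambda>r. if r \<in> {1..N} then x else 0)"
  obtain v where v: "v \<in> W0" "dsum_dist N (lp_dist p) v x_diag < \<eta>"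
    using diag x \<eta> unfolding x_diag_def by blast
  have v_lp: "v j \<in> lp_space p" if "j \<in> {1..N}" for j using v(1) W0 that unfolding dsum_carrier_def by blast
  have x_diag: "x_diag \<in> dsum_carrier N (lp_space p)" using x unfolding x_diag_def dsum_carrier_def by auto
  have close: "norm (v j m - x m) \<le> dsum_dist N (lp_dist p) v x_diag" if "j \<in> {1..N}" for j m
    using norm_le_dsum_dist[OF _ x_diag that p, of v m] v(1) W0 that unfolding x_diag_def by auto
  have "\<forall>i\<in>{1..N}. \<exists>y. y \<in> lp_space p \<and> (\<forall>m. norm (y m - x m) < \<eta>) \<and>
      conv_ms (lp_dist p) (\<lambda>k. (S i ^^ nk k) (Rk k v)) y"
  proof
    fix i assume "i \<in> {1..N}"
    then obtain y where y: "in_conv_hull N v y" "conv_ms (lp_dist p) (\<lambda>k. (S i ^^ nk k) (Rk k v)) y"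
      using lim v(1) by blast
    have "norm (y m - x m) \<le> dsum_dist N (lp_dist p) v x_diag" for m
      by (rule norm_in_conv_hull_diff_le[OF y(1)]) (rule close)
    then have "norm (y m - x m) < \<eta>" for m using v(2) by (meson le_less_trans)
    then show "\<exists>y. y \<in> lp_space p \<and> (\<forall>m. norm (y m - x m) < \<eta>) \<and>
        conv_ms (lp_dist p) (\<lambda>k. (S i ^^ nk k) (Rk k v)) y"
      using in_conv_hull_lp_space[OF y(1) v_lp p] y(2) by blast
  qed
  then obtain Y where "\<forall>i\<in>{1..N}. Y i \<in> lp_space p \<and> (\<forall>m. norm (Y i m - x m) < \<eta>) \<and>
      conv_ms (lp_dist p) (\<lambda>k. (S i ^^ nk k) (Rk k v)) (Y i)"
    by (rule bchoice[elim_format]) blast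
  then show ?thesis using that v(1) by blast
qed

context pseudo_shift_family
begin

lemma common_approx_preimages_of_pair:
  assumes z: "z \<in> dsum_carrier 2 (lp_space p)" and small: "\<forall>j. norm (z 1 j) < \<eta>"
    and close: "\<And>i r m. \<lbrakk>i \<in> {1..N}; r \<in> {1..2}; 1 \<le> m\<rbrakk> \<Longrightarrow>
      norm ((dsum_op 2 (T i) ^^ n) z r m - test_pair M r m) < \<eta>"
  shows "\<exists>n a b. (\<forall>j. norm (a j) < \<eta>) \<and> shifts_close \<eta> n a (block M) \<and> shifts_close \<eta> n b (ramp M)"
proof (intro exI conjI)
  have "norm ((T i ^^ n) (z r) m - test_pair M r m) < \<eta>" if "i \<in> {1..N}" "r \<in> {1..2}" "1 \<le> m" for i r m
    using close[OF that] that(2) unfolding dsum_op_funpow[OF z] by simp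
  from this[of _ 1] this[of _ 2] show "shifts_close \<eta> n (z 1) (block M)" "shifts_close \<eta> n (z 2) (ramp M)"
    unfolding shifts_close_def test_pair_def by auto
qed (use small in simp)

lemma common_approx_preimages_if_weakly_mixing:
  assumes mixing: "s_weakly_mixing (lp_space p) (lp_dist p) N T"
  shows common_approx_preimages
  unfolding common_approx_preimages_def
proof (intro allI impI)
  fix M :: nat and \<eta> :: real assume "1 \<le> M" and \<eta>: "0 < \<eta>"
  define X where "X = dsum_carrier 2 (lp_space p :: (nat \<Rightarrow> 'k) set)"
  define ball where "ball x = {u \<in> X. \<exists>\<eta>'<\<eta>. \<forall>r\<in>{1..2}. \<forall>m. norm (u r m - x r m) \<le> \<eta>'}" for x
  have ball_open: "open_in_ms X (dsum_dist 2 (lp_dist p)) (ball x)" for x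
    unfolding ball_def X_def by (rule open_in_ms_coordinate_ball[OF p_pos])
  have "x \<in> ball x" if "x \<in> X" for x
    unfolding ball_def using that \<eta> by auto
  then have "ball (test_pair M) \<noteq> {}" "ball 0 \<noteq> {}"
    using zero_in_dsum_carrier test_pair_in_dsum_carrier unfolding X_def by blast+
  then obtain n y where y: "y \<in> ball 0" "\<forall>i\<in>{1..N}. (dsum_op 2 (T i) ^^ n) y \<in> ball (test_pair M)"
    using mixing[unfolded s_weakly_mixing_def s_top_transitive_def X_def[symmetric], rule_format,
        OF ball_open ball_open]
    by blast
  show "\<exists>n a b. (\<forall>j. norm (a j) < \<eta>) \<and> shifts_close \<eta> n a (block M) \<and> shifts_close \<eta> n b (ramp M)"
  proof (rule common_approx_preimages_of_pair)
    show "y \<in> dsum_carrier 2 (lp_space p)" using y(1) unfolding ball_def X_def by blast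
    obtain \<eta>' where "\<eta>' < \<eta>" and "\<forall>r\<in>{1..2}. \<forall>m. norm (y r m - 0 r m) \<le> \<eta>'"
      using y(1) unfolding ball_def by blast
    then have "norm (y 1 j) \<le> \<eta>'" for j by force
    then show "\<forall>j. norm (y 1 j) < \<eta>" using \<open>\<eta>' < \<eta>\<close> by (meson le_less_trans)
    fix i r m :: nat assume "i \<in> {1..N}" "r \<in> {1..2}"
    obtain \<eta>' where "\<eta>' < \<eta>"
      and "\<forall>r\<in>{1..2}. \<forall>m. norm ((dsum_op 2 (T i) ^^ n) y r m - test_pair M r m) \<le> \<eta>'"
      using y(2) \<open>i \<in> {1..N}\<close> unfolding ball_def by blast
    then show "norm ((dsum_op 2 (T i) ^^ n) y r m - test_pair M r m) < \<eta>"
      using \<open>r \<in> {1..2}\<close> by (meson le_less_trans)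
  qed
qed

lemma common_approx_preimages_if_blowup_collapse:
  assumes "sim_bc_criterion (dsum_carrier 2 (lp_space p)) (dsum_dist 2 (lp_dist p)) N (\<lambda>i. dsum_op 2 (T i))"
  shows common_approx_preimages
  unfolding common_approx_preimages_def
proof (intro allI impI)
  fix M :: nat and \<eta> :: real assume "1 \<le> M" and \<eta>: "0 < \<eta>"
  define X where "X = dsum_carrier 2 (lp_space p :: (nat \<Rightarrow> 'k) set)"
  define d where "d = dsum_dist 2 (lp_dist p :: (nat \<Rightarrow> 'k) \<Rightarrow> _)"
  obtain nk Y0 Sk where dense: "dense_in_ms X d Y0" and Sk: "\<forall>k. \<forall>y\<in>Y0. Sk k y \<in> X"
    and bc: "\<forall>e>0. \<forall>K::nat. \<forall>y0\<in>Y0. \<exists>k\<ge>K. d (Sk k y0) 0 < e \<and>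
            (\<forall>i\<in>{1..N}. d ((dsum_op 2 (T i) ^^ nk k) (Sk k y0)) y0 < e)"
    using assms unfolding sim_bc_criterion_def X_def[symmetric] d_def[symmetric] by blast
  obtain y0 where y0: "y0 \<in> Y0" "d (test_pair M) y0 < \<eta> / 2"
    using dense test_pair_in_dsum_carrier \<eta> unfolding dense_in_ms_def X_def by (meson half_gt_zero)
  have y0_X: "y0 \<in> X" using dense y0(1) unfolding dense_in_ms_def by blast
  obtain k where k: "d (Sk k y0) 0 < \<eta> / 2" "\<forall>i\<in>{1..N}. d ((dsum_op 2 (T i) ^^ nk k) (Sk k y0)) y0 < \<eta> / 2"
    using bc y0(1) \<eta> by (meson half_gt_zero)
  define z where "z = Sk k y0"
  have z: "z \<in> X" using Sk y0(1) unfolding z_def by blast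
  show "\<exists>n a b. (\<forall>j. norm (a j) < \<eta>) \<and> shifts_close \<eta> n a (block M) \<and> shifts_close \<eta> n b (ramp M)"
  proof (rule common_approx_preimages_of_pair[of z])
    show "z \<in> dsum_carrier 2 (lp_space p)" using z unfolding X_def .
    show "\<forall>j. norm (z 1 j) < \<eta>"
    proof
      fix j
      have "norm (z 1 j - 0 1 j) \<le> d z 0"
        using norm_le_dsum_dist[OF z[unfolded X_def] zero_in_dsum_carrier _ p_pos, of 1 j]
        unfolding d_def by simp
      then have "norm (z 1 j) \<le> d z 0" by simp
      then show "norm (z 1 j) < \<eta>" using k(1) norm_ge_zero[of "z 1 j"] unfolding z_def by linarith
    qed
    fix i r m :: nat assume i: "i \<in> {1..N}" and r: "r \<in> {1..2}"
    have "(dsum_op 2 (T i) ^^ nk k) z \<in> X"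
      unfolding X_def by (rule dsum_op_funpow_in_carrier) (use z T_in_lp_space[OF i] X_def in auto)
    then show "norm ((dsum_op 2 (T i) ^^ nk k) z r m - test_pair M r m) < \<eta>"
      using norm_diff_less_of_dsum_dist_less[OF _ test_pair_in_dsum_carrier y0_X[unfolded X_def] r p_pos]
        k(2) i y0(2) unfolding z_def X_def d_def by blast
  qed
qed

lemma eventually_shifts_close_of_limits:
  assumes a: "\<And>k. a k \<in> lp_space p" and Y: "\<And>i. i \<in> {1..N} \<Longrightarrow> Y i \<in> lp_space p"
    and Y_close: "\<And>i m. i \<in> {1..N} \<Longrightarrow> norm (Y i m - x m) < \<eta> / 2"
    and lim: "\<And>i. i \<in> {1..N} \<Longrightarrow> conv_ms (lp_dist p) (\<lambda>k. (T i ^^ nk k) (a k)) (Y i)"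
  shows "eventually (\<lambda>k. shifts_close \<eta> (nk k) (a k) x) sequentially"
proof -
  have "0 < \<eta> / 2" using le_less_trans[OF norm_ge_zero Y_close[of 1 0]] N_ge_1 by simp
  then have "eventually (\<lambda>k. \<forall>i\<in>{1..N}. lp_dist p ((T i ^^ nk k) (a k)) (Y i) < \<eta> / 2) sequentially"
    using lim unfolding conv_ms_def by (intro eventually_ball_finite ballI order_tendstoD(2)) auto
  then show ?thesis
  proof (rule eventually_mono)
    fix k assume close: "\<forall>i\<in>{1..N}. lp_dist p ((T i ^^ nk k) (a k)) (Y i) < \<eta> / 2"
    have "norm ((T i ^^ nk k) (a k) m - x m) < \<eta>" if i: "i \<in> {1..N}" for i m
      using norm_le_lp_dist[OF T_funpow_in_lp_space[OF i a[of k], of "nk k"] Y[OF i] p_pos, of m] close i Y_close[OF i, of m]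
        norm_triangle_lt[of "(T i ^^ nk k) (a k) m - Y i m" "Y i m - x m" \<eta>] by fastforce
    then show "shifts_close \<eta> (nk k) (a k) x" unfolding shifts_close_def by blast
  qed
qed

lemma common_approx_preimages_if_hypercyclicity_criterion:
  assumes "sim_hc_criterion (lp_space p) (lp_dist p) N T"
  shows common_approx_preimages
  unfolding common_approx_preimages_def
proof (intro allI impI)
  fix M :: nat and \<eta> :: real assume "1 \<le> M" and \<eta>: "0 < \<eta>"
  obtain nk :: "nat \<Rightarrow> nat" and W0 and Rk :: "nat \<Rightarrow> (nat \<Rightarrow> nat \<Rightarrow> 'k) \<Rightarrow> (nat \<Rightarrow> 'k)"
    where W0: "W0 \<subseteq> dsum_carrier N (lp_space p)"
    and diag: "\<forall>y\<in>lp_space p. \<forall>e>0. \<exists>v\<in>W0. dsum_dist N (lp_dist p) v (\<lambda>r. if r \<in> {1..N} then y else 0) < e"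
    and Rk_lp: "\<forall>k. \<forall>v\<in>W0. Rk k v \<in> lp_space p"
    and Rk_0: "\<forall>v\<in>W0. conv_ms (lp_dist p) (\<lambda>k. Rk k v) 0"
    and lim: "\<forall>v\<in>W0. \<forall>i\<in>{1..N}. \<exists>y. in_conv_hull N v y \<and> conv_ms (lp_dist p) (\<lambda>k. (T i ^^ nk k) (Rk k v)) y"
    using assms unfolding sim_hc_criterion_def by (elim exE conjE) blast
  have \<eta>2: "0 < \<eta> / 2" using \<eta> by simp
  obtain v1 Y1 where v1: "v1 \<in> W0" "\<And>i. i \<in> {1..N} \<Longrightarrow> Y1 i \<in> lp_space p"
    "\<And>i m. i \<in> {1..N} \<Longrightarrow> norm (Y1 i m - block M m) < \<eta> / 2"
    "\<And>i. i \<in> {1..N} \<Longrightarrow> conv_ms (lp_dist p) (\<lambda>k. (T i ^^ nk k) (Rk k v1)) (Y1 i)"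
    by (rule hc_limits_near[OF W0 diag lim block_in_lp_space[of M] \<eta>2 p_pos]) blast
  obtain v2 Y2 where v2: "v2 \<in> W0" "\<And>i. i \<in> {1..N} \<Longrightarrow> Y2 i \<in> lp_space p"
    "\<And>i m. i \<in> {1..N} \<Longrightarrow> norm (Y2 i m - ramp M m) < \<eta> / 2"
    "\<And>i. i \<in> {1..N} \<Longrightarrow> conv_ms (lp_dist p) (\<lambda>k. (T i ^^ nk k) (Rk k v2)) (Y2 i)"
    by (rule hc_limits_near[OF W0 diag lim ramp_in_lp_space[of M] \<eta>2 p_pos]) blast
  have "eventually (\<lambda>k. shifts_close \<eta> (nk k) (Rk k v1) (block M)) sequentially"
    by (rule eventually_shifts_close_of_limits[where a = "\<lambda>k. Rk k v1" and Y = Y1]) (use Rk_lp v1 in auto)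
  moreover have "eventually (\<lambda>k. shifts_close \<eta> (nk k) (Rk k v2) (ramp M)) sequentially"
    by (rule eventually_shifts_close_of_limits[where a = "\<lambda>k. Rk k v2" and Y = Y2]) (use Rk_lp v2 in auto)
  moreover have "eventually (\<lambda>k. lp_dist p (Rk k v1) 0 < \<eta>) sequentially"
    using order_tendstoD(2)[OF Rk_0[rule_format, OF v1(1), unfolded conv_ms_def] \<eta>] .
  ultimately obtain k where k: "shifts_close \<eta> (nk k) (Rk k v1) (block M)"
      "shifts_close \<eta> (nk k) (Rk k v2) (ramp M)" "lp_dist p (Rk k v1) 0 < \<eta>"
    using eventually_happens'[OF sequentially_bot eventually_conj[OF _ eventually_conj]] by blast
  have "norm (Rk k v1 j) < \<eta>" for j
    using norm_le_lp_dist[OF _ zero_in_lp_space p_pos, of "Rk k v1" j] Rk_lp v1(1) k(3) by simp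
  then show "\<exists>n a b. (\<forall>j. norm (a j) < \<eta>) \<and> shifts_close \<eta> n a (block M) \<and> shifts_close \<eta> n b (ramp M)"
    using k(1,2) by blast
qed

end
section \<open>An approximate right inverse of the iterates\<close>

context pseudo_shift_family
begin

definition targets :: "nat \<Rightarrow> nat \<Rightarrow> nat set" where
  "targets n S = (\<lambda>(i, m). (f i ^^ n) m) ` ({1..N} \<times> {1..S})"

lemma mem_targets_iff: "j \<in> targets n S \<longleftrightarrow> (\<exists>i\<in>{1..N}. \<exists>m\<in>{1..S}. (f i ^^ n) m = j)"
proof
  assume "j \<in> targets n S"
  then obtain i m where "i \<in> {1..N}" "m \<in> {1..S}" "j = (f i ^^ n) m" unfolding targets_def by auto
  then show "\<exists>i\<in>{1..N}. \<exists>m\<in>{1..S}. (f i ^^ n) m = j" by metis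
next
  assume "\<exists>i\<in>{1..N}. \<exists>m\<in>{1..S}. (f i ^^ n) m = j"
  then obtain i m where "i \<in> {1..N}" "m \<in> {1..S}" "j = (f i ^^ n) m" by auto
  then show "j \<in> targets n S" unfolding targets_def by (auto intro: image_eqI[of _ _ "(i, m)"])
qed

lemma finite_targets: "finite (targets n S)"
  unfolding targets_def by simp

lemma card_targets_le: "card (targets n S) \<le> N * S"
  unfolding targets_def using card_image_le[of "{1..N} \<times> {1..S}"] by (simp add: card_cartesian_product)

lemma zero_notin_targets: "0 \<notin> targets n S"
proof
  assume "0 \<in> targets n S"
  then obtain i m where "i \<in> {1..N}" "m \<in> {1..S}" "(f i ^^ n) m = 0" unfolding mem_targets_iff by blast
  then show False using add_le_funpow_f[of i m n] by simp
qed

text \<open>The coordinate \<open>m \<le> S\<close> of \<open>y\<close> is transported to position \<open>f\<^sub>i\<^sup>n(m)\<close> and divided by the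
  weight \<open>W\<^sub>i(m, n)\<close>, so that \<open>T\<^sub>i\<^sup>n\<close> brings it back. Where several pairs \<open>(i, m)\<close> hit the same
  position an arbitrary one is chosen; for a good exponent \<open>n\<close> the choice hardly matters.\<close>

definition right_inv :: "nat \<Rightarrow> nat \<Rightarrow> (nat \<Rightarrow> 'k) \<Rightarrow> nat \<Rightarrow> 'k" where
  "right_inv n S y j = (if j \<in> targets n S then
     (let (i, m) = SOME (i, m). i \<in> {1..N} \<and> m \<in> {1..S} \<and> (f i ^^ n) m = j in y m / W i m n)
   else 0)"

lemma right_inv_at_target:
  assumes "j \<in> targets n S"
  obtains i m where "i \<in> {1..N}" "m \<in> {1..S}" "(f i ^^ n) m = j" "right_inv n S y j = y m / W i m n"
proof -
  obtain i m where "i \<in> {1..N}" "m \<in> {1..S}" "(f i ^^ n) m = j"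
    using assms unfolding mem_targets_iff by blast
  then have "\<exists>q. case q of (i, m) \<Rightarrow> i \<in> {1..N} \<and> m \<in> {1..S} \<and> (f i ^^ n) m = j"
    by (intro exI[of _ "(i, m)"]) simp
  from someI_ex[OF this] show ?thesis
    using that assms unfolding right_inv_def by (auto split: prod.splits)
qed

lemma right_inv_outside: "j \<notin> targets n S \<Longrightarrow> right_inv n S y j = 0"
  unfolding right_inv_def by simp

lemma right_inv_in_lp_space: "right_inv n S y \<in> lp_space p"
  by (rule lp_space_finite_support[OF finite_targets[of n S]]) (auto simp: right_inv_outside zero_notin_targets)

lemma lp_sum_right_inv_le:
  assumes good: "good_exponent \<epsilon> S L n" and L: "0 < L" and B: "\<And>m. norm (y m) \<le> B"
  shows "lp_sum p (right_inv n S y) \<le> real (N * S) * (B / L) powr p"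
proof -
  have "norm (right_inv n S y j) \<le> B / L" if j: "j \<in> targets n S" for j
  proof -
    obtain i m where im: "i \<in> {1..N}" "m \<in> {1..S}" "right_inv n S y j = y m / W i m n"
      using right_inv_at_target[OF j] by metis
    have "L < norm (W i m n)" using good im unfolding good_exponent_def by blast
    then show ?thesis
      using im(3) B[of m] L order.trans[OF norm_ge_zero B[of m]]
      by (auto simp: norm_divide intro!: frac_le)
  qed
  then have "lp_sum p (right_inv n S y) \<le> real (card (targets n S)) * (B / L) powr p"
    by (intro lp_sum_le_card_mult[OF finite_targets _ p_pos]) (auto simp: right_inv_outside)
  also have "\<dots> \<le> real (N * S) * (B / L) powr p"
    using card_targets_le[of n S] by (intro mult_right_mono) (simp_all only: of_nat_le_iff powr_ge_zero)
  finally show ?thesis .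
qed

lemma norm_W_right_inv_diff_le:
  assumes ratio: "ratio_condition \<epsilon> S n" and \<epsilon>: "0 \<le> \<epsilon>"
    and B: "\<And>m. norm (y m) \<le> B" and supp: "\<And>m. S < m \<Longrightarrow> y m = 0"
    and l: "l \<in> {1..N}" and m: "1 \<le> m"
  shows "norm (W l m n * right_inv n S y ((f l ^^ n) m) - y m) \<le> \<epsilon> * B"
proof -
  have B0: "0 \<le> B" using order.trans[OF norm_ge_zero B] .
  show ?thesis
  proof (cases "(f l ^^ n) m \<in> targets n S")
    case False
    then have "m \<notin> {1..S}" using l unfolding mem_targets_iff by blast
    then show ?thesis using False supp m B0 \<epsilon> by (simp add: right_inv_outside)
  next
    case True
    then obtain i m0 where i: "i \<in> {1..N}" and m0: "m0 \<in> {1..S}" and hit: "(f i ^^ n) m0 = (f l ^^ n) m"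
      and inv_value: "right_inv n S y ((f l ^^ n) m) = y m0 / W i m0 n"
      by (rule right_inv_at_target)
    have W_i: "W i m0 n \<noteq> 0" using W_nonzero[OF i] m0 by simp
    consider "i = l" | "i \<noteq> l" "m \<in> {1..S}" | "i \<noteq> l" "m \<notin> {1..S}" by blast
    then show ?thesis
    proof cases
      case 1
      then have "m0 = m" using funpow_f_eq_imp_eq[OF l _ m] hit m0 by auto
      then show ?thesis using inv_value W_i 1 B0 \<epsilon> by simp
    next
      case 2
      from ratio_conditionD(2)[OF ratio l i 2(1)[symmetric] m0 hit 2(2)]
      have "m0 = m" and near: "norm (W l m n / W i m0 n - 1) < \<epsilon>" by auto
      have "W l m n * (y m0 / W i m0 n) - y m = y m * (W l m n / W i m0 n - 1)"
        using W_i \<open>m0 = m\<close> by (simp add: field_simps)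
      also have "norm \<dots> \<le> B * \<epsilon>"
        unfolding norm_mult using B[of m] near B0 by (intro mult_mono) auto
      finally show ?thesis using inv_value by (simp add: mult.commute)
    next
      case 3
      have small: "norm (W l m n / W i m0 n) < \<epsilon>"
        using ratio_conditionD(1)[OF ratio l i 3(1)[symmetric] m0 hit m 3(2)] .
      have "norm (W l m n * (y m0 / W i m0 n)) = norm (y m0) * norm (W l m n / W i m0 n)"
        by (simp add: norm_mult norm_divide)
      also have "\<dots> \<le> B * \<epsilon>" using B[of m0] small B0 by (intro mult_mono) auto
      finally show ?thesis using inv_value supp[of m] 3 m by (simp add: mult.commute)
    qed
  qed
qed

lemma lp_sum_shift_right_inv_diff_le:
  assumes ratio: "ratio_condition \<epsilon> S n" and \<epsilon>: "0 \<le> \<epsilon>"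
    and B: "\<And>m. norm (y m) \<le> B" and y0: "y 0 = 0" and supp: "\<And>m. S < m \<Longrightarrow> y m = 0"
    and l: "l \<in> {1..N}"
  shows "summable (\<lambda>m. norm ((T l ^^ n) (right_inv n S y) m - y m) powr p)"
    and "lp_sum p (\<lambda>m. (T l ^^ n) (right_inv n S y) m - y m) \<le> real ((N + 1) * S) * (\<epsilon> * B) powr p"
proof -
  define E where "E = {1..S} \<union> ((f l ^^ n) -` targets n S \<inter> {1..})"
  have finite: "finite E"
    unfolding E_def by (intro finite_UnI finite_vimage_IntI finite_targets inj_on_funpow_f[OF l]) simp
  have "card E \<le> card {1..S} + card ((f l ^^ n) -` targets n S \<inter> {1..})"
    unfolding E_def by (rule card_Un_le)
  also have "card ((f l ^^ n) -` targets n S \<inter> {1..}) \<le> card (targets n S)"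
    by (rule card_vimage_inj_on_le[OF inj_on_funpow_f[OF l] finite_targets])
  finally have card: "card E \<le> (N + 1) * S" using card_targets_le[of n S] by simp
  have at_0: "(T l ^^ n) (right_inv n S y) 0 = 0"
  proof (cases "n = 0")
    case False
    then show ?thesis using pseudo_shift_funpow_at_0[of n] by simp
  qed (simp add: right_inv_outside zero_notin_targets)
  have err: "(T l ^^ n) (right_inv n S y) m - y m = W l m n * right_inv n S y ((f l ^^ n) m) - y m"
    if "1 \<le> m" for m
    using T_funpow[OF l that] by simp
  have outside: "(T l ^^ n) (right_inv n S y) m - y m = 0" if "m \<notin> E" for m
  proof (cases "m = 0")
    case False
    then have "(f l ^^ n) m \<notin> targets n S" "\<not> m \<le> S" using that unfolding E_def by auto
    then show ?thesis using err[of m] False supp[of m] by (simp add: right_inv_outside)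
  qed (simp add: at_0 y0)
  have bound: "norm ((T l ^^ n) (right_inv n S y) m - y m) \<le> \<epsilon> * B" for m
  proof (cases "m = 0")
    case True
    then show ?thesis using at_0 y0 order.trans[OF norm_ge_zero B] \<epsilon> by simp
  next
    case False
    then have m: "1 \<le> m" by simp
    show ?thesis using err[OF m] norm_W_right_inv_diff_le[OF ratio \<epsilon> B supp l m] by simp
  qed
  show "summable (\<lambda>m. norm ((T l ^^ n) (right_inv n S y) m - y m) powr p)"
    by (rule summable_finite_support[OF finite outside])
  have "lp_sum p (\<lambda>m. (T l ^^ n) (right_inv n S y) m - y m) \<le> real (card E) * (\<epsilon> * B) powr p"
    by (rule lp_sum_le_card_mult[OF finite outside p_pos bound])
  also have "\<dots> \<le> real ((N + 1) * S) * (\<epsilon> * B) powr p"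
    using card by (intro mult_right_mono) (simp_all only: of_nat_le_iff powr_ge_zero)
  finally show "lp_sum p (\<lambda>m. (T l ^^ n) (right_inv n S y) m - y m) \<le> real ((N + 1) * S) * (\<epsilon> * B) powr p" .
qed

end

section \<open>A sequence of good exponents yields the dynamical properties\<close>

lemma tendsto_zero_if_eventually_less:
  fixes g :: "'a \<Rightarrow> real"
  assumes "\<And>e. 0 < e \<Longrightarrow> eventually (\<lambda>k. g k < e) F" "\<And>k. 0 \<le> g k"
  shows "(g \<longlongrightarrow> 0) F"
proof (rule order_tendstoI)
  fix a :: real assume "a < 0"
  then show "eventually (\<lambda>k. a < g k) F" using assms(2) by (intro always_eventually allI) (rule less_le_trans)
qed (rule assms(1))

definition finitely_supported :: "(nat \<Rightarrow> 'a::zero) \<Rightarrow> bool" where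
  "finitely_supported x \<longleftrightarrow> (\<exists>S. \<forall>m>S. x m = 0)"

definition support_bound :: "(nat \<Rightarrow> 'a::zero) \<Rightarrow> nat" where
  "support_bound x = (SOME S. \<forall>m>S. x m = 0)"

lemma support_bound_zero:
  assumes "finitely_supported x" "support_bound x < m"
  shows "x m = 0"
proof -
  have "\<exists>S. \<forall>m>S. x m = 0" using assms(1) unfolding finitely_supported_def .
  from someI_ex[OF this] show ?thesis using assms(2) unfolding support_bound_def by blast
qed

lemma finitely_supported_zero [simp]: "finitely_supported 0"
  unfolding finitely_supported_def by simp

lemma finitely_supported_truncate: "finitely_supported (truncate S x)"
  unfolding finitely_supported_def truncate_def by (intro exI[of _ S]) auto

lemma eventually_mult_powr_divide_less:
  fixes B c e p :: real
  assumes "0 \<le> B" "0 < p" "0 < e"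
  shows "eventually (\<lambda>k. c * (B / (real k + 1)) powr p < e) sequentially"
proof -
  have "(\<lambda>k. B / (real k + 1)) \<longlonglongrightarrow> 0"
    using LIMSEQ_Suc[OF lim_const_over_n[of B]] by (simp add: add.commute)
  then have "(\<lambda>k. (B / (real k + 1)) powr p) \<longlonglongrightarrow> 0"
    by (rule tendsto_zero_powrI[OF _ tendsto_const _ assms(2)]) (simp add: assms(1))
  then have "(\<lambda>k. c * (B / (real k + 1)) powr p) \<longlonglongrightarrow> 0"
    by (rule tendsto_mult_right_zero)
  then show ?thesis using assms(3) by (rule order_tendstoD(2))
qed

lemma dense_finitely_supported:
  assumes "0 < p"
  shows "dense_in_ms (lp_space p) (lp_dist p) {x \<in> lp_space p. finitely_supported x}"
  unfolding dense_in_ms_def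
proof (intro conjI ballI allI impI)
  fix x :: "nat \<Rightarrow> 'a" and e :: real assume "x \<in> lp_space p" "0 < e"
  then obtain S where "lp_dist p x (truncate S x) < e"
    using eventually_happens'[OF sequentially_bot eventually_lp_dist_truncate_less[OF _ assms]] by blast
  then show "\<exists>a\<in>{x \<in> lp_space p. finitely_supported x}. lp_dist p x a < e"
    using \<open>x \<in> lp_space p\<close> truncate_in_lp_space finitely_supported_truncate by blast
qed auto

lemma dense_finitely_supported_dsum:
  assumes p: "0 < p" and R: "1 \<le> R"
  shows "dense_in_ms (dsum_carrier R (lp_space p)) (dsum_dist R (lp_dist p))
    {y \<in> dsum_carrier R (lp_space p). \<forall>r. finitely_supported (y r)}"
  unfolding dense_in_ms_def
proof (intro conjI ballI allI impI)
  fix x :: "nat \<Rightarrow> nat \<Rightarrow> 'a" and e :: real assume x: "x \<in> dsum_carrier R (lp_space p)" and e: "0 < e"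
  have "eventually (\<lambda>S. \<forall>r\<in>{1..R}. lp_dist p (x r) (truncate S (x r)) < e / real R) sequentially"
    using x e R unfolding dsum_carrier_def
    by (intro eventually_ball_finite ballI eventually_lp_dist_truncate_less p) auto
  then obtain S where S: "\<forall>r\<in>{1..R}. lp_dist p (x r) (truncate S (x r)) < e / real R"
    using eventually_happens' sequentially_bot by blast
  define a where "a = (\<lambda>r. if r \<in> {1..R} then truncate S (x r) else 0)"
  have "a \<in> {y \<in> dsum_carrier R (lp_space p). \<forall>r. finitely_supported (y r)}"
    using x unfolding a_def dsum_carrier_def
    by (auto simp: finitely_supported_truncate truncate_in_lp_space)
  moreover have "dsum_dist R (lp_dist p) x a < e"
    by (rule dsum_dist_less[OF R]) (use S in \<open>simp add: a_def\<close>)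
  ultimately show "\<exists>a\<in>{y \<in> dsum_carrier R (lp_space p). \<forall>r. finitely_supported (y r)}.
      dsum_dist R (lp_dist p) x a < e" by blast
qed auto

context pseudo_shift_family
begin

lemma good_sequence_ge: "good_sequence nk \<Longrightarrow> k \<le> nk k"
  unfolding good_sequence_def by (simp add: seq_suble)

lemma eventually_T_funpow_eq_0:
  assumes "good_sequence nk" "i \<in> {1..N}" "finitely_supported x"
  shows "eventually (\<lambda>k. (T i ^^ nk k) x = 0) sequentially"
  using eventually_ge_at_top[of "Suc (support_bound x)"]
proof (rule eventually_mono)
  fix k assume "Suc (support_bound x) \<le> k"
  then have "support_bound x < nk k" using good_sequence_ge[OF assms(1), of k] by simp
  then show "(T i ^^ nk k) x = 0"
    by (intro T_funpow_eq_0[where S = "support_bound x" and x = x, OF assms(2)] support_bound_zero[OF assms(3)])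
qed

lemma conv_ms_T_funpow_zero:
  assumes "good_sequence nk" "i \<in> {1..N}" "finitely_supported x"
  shows "conv_ms (lp_dist p) (\<lambda>k. (T i ^^ nk k) x) 0"
proof -
  have "eventually (\<lambda>k. lp_dist p ((T i ^^ nk k) x) 0 = 0) sequentially"
    using eventually_T_funpow_eq_0[OF assms] by (rule eventually_mono) (simp add: lp_dist_self)
  then show ?thesis unfolding conv_ms_def by (rule tendsto_eventually)
qed

text \<open>Both errors are of order \<open>(\<parallel>y\<parallel>\<^sub>\<infinity> / k)\<^sup>p\<close>, summed over at most \<open>(N + 1) S\<close> coordinates.\<close>

lemma eventually_right_inv_close:
  assumes good: "good_sequence nk" and y0: "y 0 = 0" and supp: "\<And>m. S < m \<Longrightarrow> y m = 0"
    and e: "0 < e"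
  shows "eventually (\<lambda>k. lp_dist p (right_inv (nk k) S y) 0 < e \<and>
     (\<forall>l\<in>{1..N}. lp_dist p ((T l ^^ nk k) (right_inv (nk k) S y)) y < e)) sequentially"
proof -
  define B where "B = (\<Sum>m\<le>S. norm (y m))"
  have B: "norm (y m) \<le> B" for m
    unfolding B_def using supp[of m] by (cases "m \<le> S") (auto intro: member_le_sum sum_nonneg)
  have B0: "0 \<le> B" using order.trans[OF norm_ge_zero B] .
  define c where "c = real ((N + 1) * S)"
  have "eventually (\<lambda>k. c * (B / (real k + 1)) powr p < e powr p) sequentially"
    using e by (intro eventually_mult_powr_divide_less B0 p_pos) simp
  then show ?thesis
    using eventually_ge_at_top[of "Suc S"]
  proof (rule eventually_elim2)
    fix k assume small: "c * (B / (real k + 1)) powr p < e powr p" and k: "Suc S \<le> k"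
    have "good_exponent (1 / (real k + 1)) (k + 1) (real k + 1) (nk k)"
      using good unfolding good_sequence_def by blast
    then have good_k: "good_exponent (1 / (real k + 1)) S (real k + 1) (nk k)"
      by (rule good_exponent_mono) (use k in auto)
    have "lp_sum p (right_inv (nk k) S y) \<le> real (N * S) * (B / (real k + 1)) powr p"
      by (rule lp_sum_right_inv_le[OF good_k _ B]) simp
    also have "\<dots> \<le> c * (B / (real k + 1)) powr p"
      unfolding c_def by (intro mult_right_mono) auto
    finally have "lp_dist p (right_inv (nk k) S y) 0 < e"
      using small right_inv_in_lp_space
      by (intro lp_dist_less_of_lp_sum_less[OF p_pos e]) (auto simp: lp_space_def)
    moreover have "lp_dist p ((T l ^^ nk k) (right_inv (nk k) S y)) y < e" if l: "l \<in> {1..N}" for l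
    proof -
      have ratio: "ratio_condition (1 / (real k + 1)) S (nk k)"
        using good_k unfolding good_exponent_def by blast
      have "0 \<le> 1 / (real k + 1)" by simp
      note err = lp_sum_shift_right_inv_diff_le[where y = y, OF ratio this B y0 supp l]
      have "1 / (real k + 1) * B = B / (real k + 1)" by simp
      then show ?thesis
        using err(2) small unfolding c_def
        by (intro lp_dist_less_of_lp_sum_less[OF p_pos e _ err(1)]) auto
    qed
    ultimately show "lp_dist p (right_inv (nk k) S y) 0 < e \<and>
        (\<forall>l\<in>{1..N}. lp_dist p ((T l ^^ nk k) (right_inv (nk k) S y)) y < e)" by blast
  qed
qed

lemma eventually_right_inv_support_bound_close:
  assumes good: "good_sequence nk" and x: "x \<in> lp_space p" "finitely_supported x" and e: "0 < e"
  shows "eventually (\<lambda>k. lp_dist p (right_inv (nk k) (support_bound x) x) 0 < e \<and>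
     (\<forall>l\<in>{1..N}. lp_dist p ((T l ^^ nk k) (right_inv (nk k) (support_bound x) x)) x < e)) sequentially"
  using x(1) eventually_right_inv_close[where y = x, OF good _ support_bound_zero[OF x(2)] e]
  unfolding lp_space_def by blast

lemma eventually_dsum_right_inv_close:
  assumes good: "good_sequence nk" and R: "1 \<le> R" and e: "0 < e"
    and y: "y \<in> dsum_carrier R (lp_space p)" "\<forall>r. finitely_supported (y r)"
  defines "Sk k \<equiv> \<lambda>r. if r \<in> {1..R} then right_inv (nk k) (support_bound (y r)) (y r) else 0"
  shows "eventually (\<lambda>k. dsum_dist R (lp_dist p) (Sk k) 0 < e \<and>
    (\<forall>i\<in>{1..N}. dsum_dist R (lp_dist p) ((dsum_op R (T i) ^^ nk k) (Sk k)) y < e)) sequentially"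
proof -
  have "0 < e / real R" using e R by simp
  then have "eventually (\<lambda>k. \<forall>r\<in>{1..R}. lp_dist p (Sk k r) 0 < e / real R \<and>
      (\<forall>l\<in>{1..N}. lp_dist p ((T l ^^ nk k) (Sk k r)) (y r) < e / real R)) sequentially"
  proof (intro eventually_ball_finite ballI)
    fix r assume r: "r \<in> {1..R}"
    then have "y r \<in> lp_space p" using y(1) unfolding dsum_carrier_def by blast
    from eventually_right_inv_support_bound_close[OF good this y(2)[rule_format] \<open>0 < e / real R\<close>]
    show "eventually (\<lambda>k. lp_dist p (Sk k r) 0 < e / real R \<and>
        (\<forall>l\<in>{1..N}. lp_dist p ((T l ^^ nk k) (Sk k r)) (y r) < e / real R)) sequentially"
      using r unfolding Sk_def by simp
  qed simp
  then show ?thesis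
  proof (rule eventually_mono)
    fix k assume close: "\<forall>r\<in>{1..R}. lp_dist p (Sk k r) 0 < e / real R \<and>
      (\<forall>l\<in>{1..N}. lp_dist p ((T l ^^ nk k) (Sk k r)) (y r) < e / real R)"
    have Sk: "Sk k \<in> dsum_carrier R (lp_space p)"
      unfolding Sk_def dsum_carrier_def using right_inv_in_lp_space by auto
    have "dsum_dist R (lp_dist p) ((dsum_op R (T i) ^^ nk k) (Sk k)) y < e" if "i \<in> {1..N}" for i
      unfolding dsum_op_funpow[OF Sk] by (rule dsum_dist_less[OF R]) (use close that in simp)
    moreover have "dsum_dist R (lp_dist p) (Sk k) 0 < e" by (rule dsum_dist_less[OF R]) (use close in simp)
    ultimately show "dsum_dist R (lp_dist p) (Sk k) 0 < e \<and>
      (\<forall>i\<in>{1..N}. dsum_dist R (lp_dist p) ((dsum_op R (T i) ^^ nk k) (Sk k)) y < e)" by blast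
  qed
qed

lemma blowup_collapse_if_good_sequence:
  assumes good: "good_sequence nk" and R: "1 \<le> R"
  shows "sim_bc_criterion (dsum_carrier R (lp_space p)) (dsum_dist R (lp_dist p)) N (\<lambda>i. dsum_op R (T i))"
proof -
  define X where "X = dsum_carrier R (lp_space p :: (nat \<Rightarrow> 'k) set)"
  define d where "d = dsum_dist R (lp_dist p :: (nat \<Rightarrow> 'k) \<Rightarrow> _)"
  define Y0 where "Y0 = {y \<in> X. \<forall>r. finitely_supported (y r)}"
  define Sk where "Sk k y = (\<lambda>r. if r \<in> {1..R} then right_inv (nk k) (support_bound (y r)) (y r) else 0)"
    for k and y :: "nat \<Rightarrow> nat \<Rightarrow> 'k"
  have dense: "dense_in_ms X d Y0"
    unfolding X_def d_def Y0_def by (rule dense_finitely_supported_dsum[OF p_pos R])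
  have Sk_X: "\<forall>k. \<forall>y\<in>Y0. Sk k y \<in> X"
    unfolding Sk_def X_def dsum_carrier_def using right_inv_in_lp_space by auto
  have vanish: "\<forall>i\<in>{1..N}. \<forall>y\<in>Y0. conv_ms d (\<lambda>k. (dsum_op R (T i) ^^ nk k) y) 0"
  proof (intro ballI)
    fix i y assume i: "i \<in> {1..N}" and y: "y \<in> Y0"
    then have y_X: "y \<in> dsum_carrier R (lp_space p)" unfolding Y0_def X_def by blast
    have "eventually (\<lambda>k. \<forall>r\<in>{1..R}. (T i ^^ nk k) (y r) = 0) sequentially"
      using y unfolding Y0_def by (intro eventually_ball_finite ballI eventually_T_funpow_eq_0[OF good i]) auto
    then have "eventually (\<lambda>k. d ((dsum_op R (T i) ^^ nk k) y) 0 = 0) sequentially"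
      by (rule eventually_mono) (simp add: dsum_op_funpow[OF y_X] d_def dsum_dist_def lp_dist_self)
    then show "conv_ms d (\<lambda>k. (dsum_op R (T i) ^^ nk k) y) 0"
      unfolding conv_ms_def by (rule tendsto_eventually)
  qed
  have blowup: "\<forall>e>0. \<forall>K. \<forall>y\<in>Y0. \<exists>k\<ge>K. d (Sk k y) 0 < e \<and>
      (\<forall>i\<in>{1..N}. d ((dsum_op R (T i) ^^ nk k) (Sk k y)) y < e)"
  proof (intro allI impI ballI)
    fix e :: real and K :: nat and y assume "0 < e" and "y \<in> Y0"
    then have "eventually (\<lambda>k. K \<le> k \<and> d (Sk k y) 0 < e \<and>
        (\<forall>i\<in>{1..N}. d ((dsum_op R (T i) ^^ nk k) (Sk k y)) y < e)) sequentially"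
      unfolding Y0_def X_def d_def Sk_def
      by (intro eventually_conj eventually_ge_at_top eventually_dsum_right_inv_close[OF good R]) auto
    then show "\<exists>k\<ge>K. d (Sk k y) 0 < e \<and> (\<forall>i\<in>{1..N}. d ((dsum_op R (T i) ^^ nk k) (Sk k y)) y < e)"
      using eventually_happens'[OF sequentially_bot] by blast
  qed
  have "mono nk" using good unfolding good_sequence_def by (blast intro: strict_mono_mono)
  then show ?thesis
    unfolding sim_bc_criterion_def X_def[symmetric] d_def[symmetric]
    using dense Sk_X vanish blowup by blast
qed

end

lemma in_conv_hull_diag:
  assumes "1 \<le> N"
  shows "in_conv_hull N (\<lambda>r. if r \<in> {1..N} then x else 0) x"
  unfolding in_conv_hull_def
proof (intro exI[of _ "\<lambda>j. if j = 1 then 1 else 0"] conjI)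
  show "(\<Sum>j\<in>{1..N}. if j = 1 then 1 else (0::real)) = 1" using assms by simp
  show "x = (\<lambda>a. \<Sum>j\<in>{1..N}. (if j = 1 then 1 else (0::real)) *\<^sub>R (if j \<in> {1..N} then x else 0) a)"
    using assms by (simp add: if_distrib[of "\<lambda>c. c *\<^sub>R _"] cong: if_cong)
qed simp

lemma dsum_dist_diag_truncate_less:
  assumes x: "x \<in> lp_space p" and p: "0 < p" and N: "1 \<le> N" and e: "0 < e"
  obtains S where "dsum_dist N (lp_dist p) (\<lambda>r. if r \<in> {1..N} then truncate S x else 0)
    (\<lambda>r. if r \<in> {1..N} then x else 0) < e"
proof -
  have "0 < e / real N" using e N by simp
  then obtain S where S: "lp_dist p x (truncate S x) < e / real N"
    using eventually_happens'[OF sequentially_bot eventually_lp_dist_truncate_less[OF x p]] by blast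
  show ?thesis
    by (rule that, rule dsum_dist_less[OF N]) (use S lp_dist_commute[of p x] in simp)
qed

context pseudo_shift_family
begin

lemma hypercyclicity_criterion_if_good_sequence:
  assumes good: "good_sequence nk"
  shows "sim_hc_criterion (lp_space p) (lp_dist p) N T"
proof -
  define Y0 where "Y0 = {x \<in> lp_space p :: (nat \<Rightarrow> 'k) set. finitely_supported x}"
  define diag where "diag x = (\<lambda>r::nat. if r \<in> {1..N} then x else 0)" for x :: "nat \<Rightarrow> 'k"
  define W0 where "W0 = diag ` Y0"
  define Rk where "Rk k v = right_inv (nk k) (support_bound (v 1)) (v 1)" for k and v :: "nat \<Rightarrow> nat \<Rightarrow> 'k"
  have diag_1: "diag x 1 = x" for x using N_ge_1 unfolding diag_def by simp
  have truncate: "truncate S x \<in> Y0" if "x \<in> lp_space p" for S x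
    unfolding Y0_def using that by (simp add: truncate_in_lp_space finitely_supported_truncate)
  have dense: "dense_in_ms (lp_space p) (lp_dist p) Y0"
    unfolding Y0_def by (rule dense_finitely_supported[OF p_pos])
  have W0: "W0 \<subseteq> dsum_carrier N (lp_space p)"
    unfolding W0_def diag_def Y0_def dsum_carrier_def by auto
  have near_diag: "\<forall>y\<in>lp_space p. \<forall>e>0. \<exists>v\<in>W0. dsum_dist N (lp_dist p) v (\<lambda>r. if r \<in> {1..N} then y else 0) < e"
  proof (intro ballI allI impI)
    fix y :: "nat \<Rightarrow> 'k" and e :: real assume y: "y \<in> lp_space p" and "0 < e"
    then obtain S where "dsum_dist N (lp_dist p) (diag (truncate S y)) (\<lambda>r. if r \<in> {1..N} then y else 0) < e"
      using dsum_dist_diag_truncate_less[OF y p_pos N_ge_1] unfolding diag_def by blast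
    then show "\<exists>v\<in>W0. dsum_dist N (lp_dist p) v (\<lambda>r. if r \<in> {1..N} then y else 0) < e"
      using truncate[OF y] unfolding W0_def by blast
  qed
  have vanish: "\<forall>i\<in>{1..N}. \<forall>y\<in>Y0. conv_ms (lp_dist p) (\<lambda>k. (T i ^^ nk k) y) 0"
    unfolding Y0_def by (blast intro: conv_ms_T_funpow_zero[OF good])
  have close: "eventually (\<lambda>k. lp_dist p (Rk k (diag x)) 0 < e \<and>
      (\<forall>l\<in>{1..N}. lp_dist p ((T l ^^ nk k) (Rk k (diag x))) x < e)) sequentially"
    if "x \<in> Y0" "0 < e" for x e
    using eventually_right_inv_support_bound_close[OF good _ _ that(2)] that(1)
    unfolding Y0_def Rk_def diag_1 by blast
  have Rk_0: "\<forall>v\<in>W0. conv_ms (lp_dist p) (\<lambda>k. Rk k v) 0"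
    unfolding W0_def conv_ms_def
    using close by (force intro: tendsto_zero_if_eventually_less lp_dist_nonneg elim: eventually_mono)
  have limits: "\<forall>v\<in>W0. \<forall>i\<in>{1..N}. \<exists>y. in_conv_hull N v y \<and> conv_ms (lp_dist p) (\<lambda>k. (T i ^^ nk k) (Rk k v)) y"
  proof (intro ballI)
    fix v i assume "v \<in> W0" and i: "i \<in> {1..N}"
    then obtain x where x: "x \<in> Y0" and v: "v = diag x" unfolding W0_def by blast
    have "conv_ms (lp_dist p) (\<lambda>k. (T i ^^ nk k) (Rk k v)) x"
      unfolding conv_ms_def v using close[OF x] i
      by (force intro: tendsto_zero_if_eventually_less lp_dist_nonneg elim: eventually_mono)
    moreover have "in_conv_hull N v x" unfolding v diag_def by (rule in_conv_hull_diag[OF N_ge_1])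
    ultimately show "\<exists>y. in_conv_hull N v y \<and> conv_ms (lp_dist p) (\<lambda>k. (T i ^^ nk k) (Rk k v)) y" by blast
  qed
  have "strict_mono nk" "\<forall>k. \<forall>v\<in>W0. Rk k v \<in> lp_space p"
    using good right_inv_in_lp_space unfolding good_sequence_def Rk_def by auto
  then show ?thesis
    unfolding sim_hc_criterion_def using dense W0 near_diag vanish Rk_0 limits by blast
qed


text \<open>Start from \<open>b\<close> plus an approximate right inverse of \<open>a\<close>: the \<open>n\<close>-th iterates kill \<open>b\<close> and
  carry the second summand close to \<open>a\<close>.\<close>

lemma exists_orbit_between_finitely_supported:
  assumes good: "good_sequence nk"
    and a: "a \<in> dsum_carrier 2 (lp_space p)" "\<And>r m. S < m \<Longrightarrow> a r m = 0"
    and b: "b \<in> dsum_carrier 2 (lp_space p)" "\<And>r m. S < m \<Longrightarrow> b r m = 0" and e: "0 < e"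
  shows "\<exists>n\<ge>1. \<exists>z\<in>dsum_carrier 2 (lp_space p). (\<forall>r\<in>{1..2}. lp_dist p (b r) (z r) < e) \<and>
    (\<forall>i\<in>{1..N}. \<forall>r\<in>{1..2}. lp_dist p (a r) ((dsum_op 2 (T i) ^^ n) z r) < e)"
proof -
  have "eventually (\<lambda>k. \<forall>r\<in>{1..2}. lp_dist p (right_inv (nk k) S (a r)) 0 < e \<and>
      (\<forall>l\<in>{1..N}. lp_dist p ((T l ^^ nk k) (right_inv (nk k) S (a r))) (a r) < e)) sequentially"
    using a by (intro eventually_ball_finite ballI eventually_right_inv_close[OF good _ _ e])
      (auto simp: dsum_carrier_def lp_space_def)
  then obtain k where "Suc S \<le> k" and close: "\<forall>r\<in>{1..2}. lp_dist p (right_inv (nk k) S (a r)) 0 < e \<and>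
      (\<forall>l\<in>{1..N}. lp_dist p ((T l ^^ nk k) (right_inv (nk k) S (a r))) (a r) < e)"
    using eventually_happens'[OF sequentially_bot eventually_conj[OF eventually_ge_at_top]] by blast
  define n where "n = nk k"
  have S_n: "S < n" using \<open>Suc S \<le> k\<close> good_sequence_ge[OF good, of k] unfolding n_def by simp
  define z where "z = (\<lambda>r. if r \<in> {1..2} then (\<lambda>m. b r m + right_inv n S (a r) m) else 0)"
  have z: "z \<in> dsum_carrier 2 (lp_space p)"
    using b(1) lp_space_add[OF _ right_inv_in_lp_space p_pos] unfolding z_def dsum_carrier_def by auto
  have "lp_dist p (b r) (z r) < e" if "r \<in> {1..2}" for r
    using close that unfolding z_def n_def lp_dist_def by simp
  moreover have "lp_dist p (a r) ((dsum_op 2 (T i) ^^ n) z r) < e" if i: "i \<in> {1..N}" and r: "r \<in> {1..2}" for i r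
  proof -
    have "(T i ^^ n) (b r) = 0" by (rule T_funpow_eq_0[OF i b(2) S_n])
    then have "(dsum_op 2 (T i) ^^ n) z r = (T i ^^ n) (right_inv n S (a r))"
      using dsum_op_funpow[OF z] T_funpow_add[OF i] S_n r unfolding z_def by simp
    then show ?thesis using close i r lp_dist_commute[of p "a r"] unfolding n_def by simp
  qed
  ultimately show ?thesis using S_n z by (intro exI[of _ n] conjI bexI[of _ z] ballI) auto
qed

lemma exists_orbit_from_near_to_near:
  assumes good: "good_sequence nk" and u: "u \<in> dsum_carrier 2 (lp_space p)"
    and v: "v \<in> dsum_carrier 2 (lp_space p)" and e: "0 < e"
  shows "\<exists>n\<ge>1. \<exists>z\<in>dsum_carrier 2 (lp_space p). dsum_dist 2 (lp_dist p) v z < e \<and>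
    (\<forall>i\<in>{1..N}. dsum_dist 2 (lp_dist p) u ((dsum_op 2 (T i) ^^ n) z) < e)"
proof -
  have lp: "u r \<in> lp_space p" "v r \<in> lp_space p" if "r \<in> {1..2}" for r
    using u v that unfolding dsum_carrier_def by auto
  have e8: "0 < e / 8" using e by simp
  have "eventually (\<lambda>S. \<forall>r\<in>{1..2}. lp_dist p (u r) (truncate S (u r)) < e / 8 \<and>
      lp_dist p (v r) (truncate S (v r)) < e / 8) sequentially"
    using lp by (intro eventually_ball_finite ballI eventually_conj eventually_lp_dist_truncate_less p_pos e8) auto
  then obtain S where S: "\<forall>r\<in>{1..2}. lp_dist p (u r) (truncate S (u r)) < e / 8 \<and>
      lp_dist p (v r) (truncate S (v r)) < e / 8"
    using eventually_happens' sequentially_bot by blast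
  define a where "a = (\<lambda>r. if r \<in> {1..2} then truncate S (u r) else 0)"
  define b where "b = (\<lambda>r. if r \<in> {1..2} then truncate S (v r) else 0)"
  have carrier: "a \<in> dsum_carrier 2 (lp_space p)" "b \<in> dsum_carrier 2 (lp_space p)"
    using lp unfolding a_def b_def dsum_carrier_def by (auto intro: truncate_in_lp_space)
  have supp: "\<And>r m. S < m \<Longrightarrow> a r m = 0" "\<And>r m. S < m \<Longrightarrow> b r m = 0"
    unfolding a_def b_def truncate_def by auto
  obtain n z where "1 \<le> n" and z: "z \<in> dsum_carrier 2 (lp_space p)"
    and b_z: "\<forall>r\<in>{1..2}. lp_dist p (b r) (z r) < e / 8"
    and a_z: "\<forall>i\<in>{1..N}. \<forall>r\<in>{1..2}. lp_dist p (a r) ((dsum_op 2 (T i) ^^ n) z r) < e / 8"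
    using exists_orbit_between_finitely_supported[OF good carrier(1) supp(1) carrier(2) supp(2) e8] by blast
  have "lp_dist p (v r) (z r) < e / 2" if r: "r \<in> {1..2}" for r
    by (rule lp_dist_quasi_triangle[OF p_ge_1 _ lp(2)[OF r], where y = "b r"])
      (use S b_z z r e truncate_in_lp_space[OF lp(2)[OF r]] in \<open>auto simp: b_def dsum_carrier_def\<close>)
  moreover have "lp_dist p (u r) ((dsum_op 2 (T i) ^^ n) z r) < e / 2"
    if i: "i \<in> {1..N}" and r: "r \<in> {1..2}" for i r
  proof (rule lp_dist_quasi_triangle[OF p_ge_1 _ lp(1)[OF r], where y = "a r"])
    have "(dsum_op 2 (T i) ^^ n) z \<in> dsum_carrier 2 (lp_space p)"
      by (rule dsum_op_funpow_in_carrier[OF z T_in_lp_space[OF i]])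
    then show "(dsum_op 2 (T i) ^^ n) z r \<in> lp_space p" using r unfolding dsum_carrier_def by blast
  qed (use S a_z i r e truncate_in_lp_space[OF lp(1)[OF r]] in \<open>auto simp: a_def\<close>)
  ultimately have "dsum_dist 2 (lp_dist p) v z < e"
    "\<forall>i\<in>{1..N}. dsum_dist 2 (lp_dist p) u ((dsum_op 2 (T i) ^^ n) z) < e"
    by (auto intro!: dsum_dist_less)
  then show ?thesis using \<open>1 \<le> n\<close> z by blast
qed

lemma weakly_mixing_if_good_sequence:
  assumes good: "good_sequence nk"
  shows "s_weakly_mixing (lp_space p) (lp_dist p) N T"
  unfolding s_weakly_mixing_def s_top_transitive_def
proof (intro allI impI)
  fix U V :: "(nat \<Rightarrow> nat \<Rightarrow> 'k) set"
  assume U: "open_in_ms (dsum_carrier 2 (lp_space p)) (dsum_dist 2 (lp_dist p)) U" "U \<noteq> {}"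
    and V: "open_in_ms (dsum_carrier 2 (lp_space p)) (dsum_dist 2 (lp_dist p)) V" "V \<noteq> {}"
  obtain u v where "u \<in> U" "v \<in> V" using U(2) V(2) by blast
  then obtain e1 e2 where "0 < e1" "0 < e2" and u: "u \<in> dsum_carrier 2 (lp_space p)"
    "\<forall>y\<in>dsum_carrier 2 (lp_space p). dsum_dist 2 (lp_dist p) u y < e1 \<longrightarrow> y \<in> U"
    and v: "v \<in> dsum_carrier 2 (lp_space p)"
    "\<forall>y\<in>dsum_carrier 2 (lp_space p). dsum_dist 2 (lp_dist p) v y < e2 \<longrightarrow> y \<in> V"
    using U(1) V(1) unfolding open_in_ms_def by blast
  then obtain n z where "1 \<le> n" "z \<in> dsum_carrier 2 (lp_space p)" "dsum_dist 2 (lp_dist p) v z < min e1 e2"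
    "\<forall>i\<in>{1..N}. dsum_dist 2 (lp_dist p) u ((dsum_op 2 (T i) ^^ n) z) < min e1 e2"
    using exists_orbit_from_near_to_near[OF good u(1) v(1), of "min e1 e2"] by auto
  note z = this
  have "z \<in> V" using v(2) z(2,3) by simp
  moreover have "(dsum_op 2 (T i) ^^ n) z \<in> U" if i: "i \<in> {1..N}" for i
  proof -
    have "(dsum_op 2 (T i) ^^ n) z \<in> dsum_carrier 2 (lp_space p)"
      by (rule dsum_op_funpow_in_carrier[OF z(2)]) (rule T_in_lp_space[OF i])
    then show ?thesis using u(2) z(4) i by simp
  qed
  ultimately show "\<exists>n\<ge>1. \<exists>y\<in>V. \<forall>i\<in>{1..N}. ((\<lambda>i. dsum_op 2 (T i)) i ^^ n) y \<in> U"
    using z(1) by blast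
qed

theorem dynamical_conditions_equivalent:
  "(s_weakly_mixing (lp_space p) (lp_dist p) N T \<longleftrightarrow> sim_hc_criterion (lp_space p) (lp_dist p) N T)
   \<and> (sim_hc_criterion (lp_space p) (lp_dist p) N T \<longleftrightarrow>
       (\<forall>R\<ge>1. sim_bc_criterion (dsum_carrier R (lp_space p)) (dsum_dist R (lp_dist p)) N (\<lambda>i. dsum_op R (T i))))
   \<and> ((\<forall>R\<ge>1. sim_bc_criterion (dsum_carrier R (lp_space p)) (dsum_dist R (lp_dist p)) N (\<lambda>i. dsum_op R (T i)))
       \<longleftrightarrow> weight_condition)"
proof -
  define WM where "WM = s_weakly_mixing (lp_space p) (lp_dist p) N T"
  define HC where "HC = sim_hc_criterion (lp_space p) (lp_dist p) N T"
  define BC where "BC = (\<forall>R\<ge>1. sim_bc_criterion (dsum_carrier R (lp_space p)) (dsum_dist R (lp_dist p)) N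
    (\<lambda>i. dsum_op R (T i)))"
  have "WM \<Longrightarrow> has_good_exponents" "HC \<Longrightarrow> has_good_exponents" "BC \<Longrightarrow> has_good_exponents"
    unfolding WM_def HC_def BC_def
    by (intro has_good_exponents_if_common_approx_preimages common_approx_preimages_if_weakly_mixing
        common_approx_preimages_if_hypercyclicity_criterion common_approx_preimages_if_blowup_collapse, simp)+
  moreover have "WM \<and> HC \<and> BC \<and> weight_condition" if good_exponents: has_good_exponents
  proof -
    obtain nk where good: "good_sequence nk" using good_sequence_exists[OF good_exponents] .
    show ?thesis
      unfolding WM_def HC_def BC_def
      using weakly_mixing_if_good_sequence[OF good] hypercyclicity_criterion_if_good_sequence[OF good]
        blowup_collapse_if_good_sequence[OF good] weight_condition_if_good_sequence[OF good] by blast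
  qed
  ultimately have "(WM \<longleftrightarrow> HC) \<and> (HC \<longleftrightarrow> BC) \<and> (BC \<longleftrightarrow> weight_condition)"
    using has_good_exponents_if_weight_condition by blast
  then show ?thesis unfolding WM_def HC_def BC_def .
qed

end

theorem theorem3p5:
  fixes p :: real and N :: nat
    and f :: "nat \<Rightarrow> nat \<Rightarrow> nat"
    and w :: "nat \<Rightarrow> nat \<Rightarrow> 'k::real_normed_field"
  assumes "scalars_R_or_C TYPE('k)"
    and "1 \<le> p"
    and "2 \<le> N"
    and "\<forall>i\<in>{1..N}. pseudo_shift_data (f i) (w i)"
  shows
    "(s_weakly_mixing (lp_space p) (lp_dist p) N (\<lambda>i. pseudo_shift (f i) (w i))
        \<longleftrightarrow> sim_hc_criterion (lp_space p) (lp_dist p) N (\<lambda>i. pseudo_shift (f i) (w i)))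
   \<and> (sim_hc_criterion (lp_space p) (lp_dist p) N (\<lambda>i. pseudo_shift (f i) (w i))
        \<longleftrightarrow> (\<forall>R\<ge>1. sim_bc_criterion (dsum_carrier R (lp_space p)) (dsum_dist R (lp_dist p)) N
                        (\<lambda>i. dsum_op R (pseudo_shift (f i) (w i)))))
   \<and> ((\<forall>R\<ge>1. sim_bc_criterion (dsum_carrier R (lp_space p)) (dsum_dist R (lp_dist p)) N
                        (\<lambda>i. dsum_op R (pseudo_shift (f i) (w i))))
        \<longleftrightarrow> (\<exists>nk::nat \<Rightarrow> nat. strict_mono nk \<and> (\<forall>k. 0 < nk k) \<and>
              (\<forall>i\<in>{1..N}. \<forall>m\<ge>1.
                  filterlim (\<lambda>k. norm (Wprod (f i) (w i) m (nk k))) at_top sequentially) \<and>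
              (\<forall>e>0. \<forall>K M. M \<ge> 1 \<longrightarrow> (\<exists>k\<ge>K. \<forall>i\<in>{1..N}. \<forall>l\<in>{1..N}. i \<noteq> l \<longrightarrow>
                  (\<forall>m\<in>{1..M}. \<forall>m'. m' \<ge> 1 \<longrightarrow> m' \<notin> {1..M} \<longrightarrow>
                      (f l ^^ nk k) m = (f i ^^ nk k) m' \<longrightarrow>
                      norm (Wprod (f i) (w i) m' (nk k) / Wprod (f l) (w l) m (nk k)) < e) \<and>
                  (\<forall>m\<in>{1..M}. \<forall>m'\<in>{1..M}.
                      (f l ^^ nk k) m = (f i ^^ nk k) m' \<longrightarrow>
                      m = m' \<and>
                      norm (Wprod (f i) (w i) m' (nk k) / Wprod (f l) (w l) m (nk k) - 1) < e)))))"
proof -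
  interpret pseudo_shift_family p N f w
    using assms(2-4) by unfold_locales auto
  show ?thesis
    using dynamical_conditions_equivalent unfolding weight_condition_def ratio_condition_def .
qed

end
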